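(* For each compact metric space $G\in\mathcal{M}$ and each real $r>\operatorname{diam}G$, the sphere $\{Y\in\mathcal{M}: d_{GH}(G,Y)=r\}$ in $\mathcal{M}$ is path connected (as a subspace of the metric space $(\mathcal{M},d_{GH})$).
   Context: $\mathcal{M}$ denotes the set of isometry classes of compact metric spaces endowed with the Gromov–Hausdorff distance $d_{GH}$ (a metric on $\mathcal{M}$): $d_{GH}(X,Y)$ is the infimum of $r$ such that there exist a metric space $Z$ and subsets $X',Y'\subset Z$ isometric to $X,Y$ with Hausdorff distance $d_H(X',Y')\le r$. *)

theory Defs
  imports "HOL-Analysis.Analysis"
begin

text \<open>Every compact metric space has cardinality at most the continuum, so up to
isometry it can be realised with carrier a subset of the reals (with an arbitrary
metric).\<close>

definition compact_ms :: "'a metric \<Rightarrow> bool" where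
  "compact_ms m \<longleftrightarrow> mspace m \<noteq> {} \<and> compact_space (mtopology_of m)"

definition isometric_embedding :: "'a metric \<Rightarrow> 'b metric \<Rightarrow> ('a \<Rightarrow> 'b) \<Rightarrow> bool" where
  "isometric_embedding X Z f \<longleftrightarrow> f ` mspace X \<subseteq> mspace Z \<and>
     (\<forall>x\<in>mspace X. \<forall>y\<in>mspace X. mdist Z (f x) (f y) = mdist X x y)"

definition isometric_ms :: "'a metric \<Rightarrow> 'b metric \<Rightarrow> bool" where
  "isometric_ms X Y \<longleftrightarrow> (\<exists>f. isometric_embedding X Y f \<and> f ` mspace X = mspace Y)"

definition mdiam :: "'a metric \<Rightarrow> real" where
  "mdiam m = Sup {mdist m x y | x y. x \<in> mspace m \<and> y \<in> mspace m}"

definition hausdorff_dist :: "'a metric \<Rightarrow> 'a set \<Rightarrow> 'a set \<Rightarrow> real" where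
  "hausdorff_dist Z A B =
     max (SUP a\<in>A. INF b\<in>B. mdist Z a b) (SUP b\<in>B. INF a\<in>A. mdist Z a b)"

text \<open>The ambient
space Z ranges over metric spaces with carrier in the reals, which loses nothing
since one may always pass to the union of the two copies (cardinality at most the
continuum).\<close>
definition dGH :: "'a metric \<Rightarrow> 'b metric \<Rightarrow> real" where
  "dGH X Y = Inf {r. \<exists>(Z::real metric) f g. isometric_embedding X Z f \<and> isometric_embedding Y Z g
                       \<and> hausdorff_dist Z (f ` mspace X) (g ` mspace Y) \<le> r}"

definition iso_class :: "real metric \<Rightarrow> real metric set" where
  "iso_class m = {m'. isometric_ms m m'}"

definition GH_space :: "real metric set set" where
  "GH_space = {iso_class m | m. compact_ms m}"

definition rep :: "real metric set \<Rightarrow> real metric" where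
  "rep A = (SOME m. m \<in> A)"

definition dGH_M :: "real metric set \<Rightarrow> real metric set \<Rightarrow> real" where
  "dGH_M A B = dGH (rep A) (rep B)"

definition diam_M :: "real metric set \<Rightarrow> real" where
  "diam_M A = mdiam (rep A)"

definition dist_topology :: "'a set \<Rightarrow> ('a \<Rightarrow> 'a \<Rightarrow> real) \<Rightarrow> 'a topology" where
  "dist_topology S d = topology (\<lambda>U. U \<subseteq> S \<and> (\<forall>x\<in>U. \<exists>e>0. \<forall>y\<in>S. d x y < e \<longrightarrow> y \<in> U))"

lemma istopology_dist_topology:
  fixes d :: "'a \<Rightarrow> 'a \<Rightarrow> real"
  shows "istopology (\<lambda>U. U \<subseteq> S \<and> (\<forall>x\<in>U. \<exists>e>0. \<forall>y\<in>S. d x y < e \<longrightarrow> y \<in> U))"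
  unfolding istopology_def
proof (intro conjI allI impI)
  fix U V
  assume hU: "U \<subseteq> S \<and> (\<forall>x\<in>U. \<exists>e>0. \<forall>y\<in>S. d x y < e \<longrightarrow> y \<in> U)"
     and hV: "V \<subseteq> S \<and> (\<forall>x\<in>V. \<exists>e>0. \<forall>y\<in>S. d x y < e \<longrightarrow> y \<in> V)"
  have "\<exists>e>0. \<forall>y\<in>S. d x y < e \<longrightarrow> y \<in> U \<inter> V" if x: "x \<in> U \<inter> V" for x
  proof -
    obtain e1 e2 where "e1 > 0" "\<forall>y\<in>S. d x y < e1 \<longrightarrow> y \<in> U"
      "e2 > 0" "\<forall>y\<in>S. d x y < e2 \<longrightarrow> y \<in> V"
      using hU hV x by blast
    then show ?thesis
      by (intro exI[of _ "min e1 e2"]) auto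
  qed
  then show "\<forall>x\<in>U \<inter> V. \<exists>e>0. \<forall>y\<in>S. d x y < e \<longrightarrow> y \<in> U \<inter> V"
    by blast
  show "U \<inter> V \<subseteq> S" using hU by blast
next
  fix K assume hK: "\<forall>U\<in>K. U \<subseteq> S \<and> (\<forall>x\<in>U. \<exists>e>0. \<forall>y\<in>S. d x y < e \<longrightarrow> y \<in> U)"
  then show "\<Union> K \<subseteq> S" by blast
  show "\<forall>x\<in>\<Union> K. \<exists>e>0. \<forall>y\<in>S. d x y < e \<longrightarrow> y \<in> \<Union> K"
  proof
    fix x assume "x \<in> \<Union> K"
    then obtain U where "U \<in> K" "x \<in> U" by blast
    with hK obtain e where "e > 0" "\<forall>y\<in>S. d x y < e \<longrightarrow> y \<in> U" by blast
    with \<open>U \<in> K\<close> show "\<exists>e>0. \<forall>y\<in>S. d x y < e \<longrightarrow> y \<in> \<Union> K" by blast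
  qed
qed

definition GH_topology :: "real metric set topology" where
  "GH_topology = dist_topology GH_space dGH_M"

end

theory Submission
  imports Defs
begin

text \<open>The Gromov-Hausdorff distance is half the infimal distortion of correspondences. Given
  \<open>Y\<close> at distance \<open>r > diam G / 2\<close> from \<open>G\<close>, deform \<open>Y\<close> into a two-point space: for
  \<open>t \<in> [0, 1]\<close> and \<open>s > 0\<close> take two copies of \<open>Y\<close> with distance
  \<open>s ((1 - t) d_Y + t [copies differ])\<close>. The distance from \<open>G\<close> to this space is Lipschitz in
  \<open>(t, s)\<close>, small for small \<open>s\<close> and unbounded in \<open>s\<close>; and once it exceeds \<open>diam G / 2\<close>,
  dilating the space by \<open>k \<ge> 1\<close> multiplies it by at least \<open>k\<close>. So for every \<open>t\<close> exactly one
  scale \<open>s(t)\<close> puts the space on the sphere of radius \<open>r\<close>, and \<open>s(t)\<close> depends continuously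
  on \<open>t\<close>. The resulting path stays on the sphere and joins \<open>Y\<close> (at \<open>t = 0\<close>) to the
  two-point space of diameter \<open>s(1)\<close>, which depends only on \<open>G\<close> and \<open>r\<close>.\<close>


definition diam_le :: "'a metric \<Rightarrow> real \<Rightarrow> bool" where
  "diam_le X B \<longleftrightarrow> (\<forall>x\<in>mspace X. \<forall>y\<in>mspace X. mdist X x y \<le> B)"

definition bounded_ms :: "'a metric \<Rightarrow> bool" where
  "bounded_ms X \<longleftrightarrow> mspace X \<noteq> {} \<and> (\<exists>B. diam_le X B)"

lemma compact_ms_imp_bounded_ms:
  assumes "compact_ms X"
  shows "bounded_ms X"
proof -
  interpret Metric_space "mspace X" "mdist X" by simp
  have "compactin mtopology (mspace X)"
    using assms by (simp add: compact_ms_def compact_space_def mtopology_of_def)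
  then have "mbounded (mspace X)" by (rule compactin_imp_mbounded)
  then show ?thesis
    using assms by (auto simp: mbounded_alt bounded_ms_def diam_le_def compact_ms_def)
qed

lemma diam_le_nonneg: "diam_le X B \<Longrightarrow> mspace X \<noteq> {} \<Longrightarrow> 0 \<le> B"
  unfolding diam_le_def by (metis all_not_in_conv mdist_nonneg order.trans)

lemma diam_le_mdiam:
  assumes "bounded_ms X"
  shows "diam_le X (mdiam X)"
proof -
  obtain B where "diam_le X B" using assms unfolding bounded_ms_def by blast
  then show ?thesis
    unfolding diam_le_def mdiam_def
    by (intro ballI cSup_upper) (auto simp: diam_le_def bdd_above_def)
qed

definition correspondence :: "'a metric \<Rightarrow> 'b metric \<Rightarrow> ('a \<times> 'b) set \<Rightarrow> bool" where
  "correspondence X Y R \<longleftrightarrow> R \<subseteq> mspace X \<times> mspace Y \<and>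
     (\<forall>x\<in>mspace X. \<exists>y. (x, y) \<in> R) \<and> (\<forall>y\<in>mspace Y. \<exists>x. (x, y) \<in> R)"

definition distortion :: "'a metric \<Rightarrow> 'b metric \<Rightarrow> ('a \<times> 'b) set \<Rightarrow> real" where
  "distortion X Y R =
     Sup {\<bar>mdist X (fst p) (fst q) - mdist Y (snd p) (snd q)\<bar> | p q. p \<in> R \<and> q \<in> R}"

definition inf_distortion :: "'a metric \<Rightarrow> 'b metric \<Rightarrow> real" where
  "inf_distortion X Y = Inf {distortion X Y R | R. correspondence X Y R}"

lemma correspondence_nonempty: "correspondence X Y R \<Longrightarrow> mspace X \<noteq> {} \<Longrightarrow> R \<noteq> {}"
  unfolding correspondence_def by blast

lemma correspondence_Times:
  "mspace X \<noteq> {} \<Longrightarrow> mspace Y \<noteq> {} \<Longrightarrow> correspondence X Y (mspace X \<times> mspace Y)"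
  unfolding correspondence_def by auto

lemma correspondence_converse: "correspondence X Y R \<Longrightarrow> correspondence Y X (R\<inverse>)"
  unfolding correspondence_def by auto

lemma correspondence_relcomp:
  assumes "correspondence X Y R" "correspondence Y Z S"
  shows "correspondence X Z (R O S)"
  unfolding correspondence_def
proof (intro conjI ballI)
  show "R O S \<subseteq> mspace X \<times> mspace Z"
    using assms unfolding correspondence_def by blast
next
  fix x assume "x \<in> mspace X"
  then obtain y z where "(x, y) \<in> R" "(y, z) \<in> S"
    using assms unfolding correspondence_def by blast
  then show "\<exists>z. (x, z) \<in> R O S" by blast
next
  fix z assume "z \<in> mspace Z"
  then obtain x y where "(x, y) \<in> R" "(y, z) \<in> S"
    using assms unfolding correspondence_def by blast
  then show "\<exists>x. (x, z) \<in> R O S" by blast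
qed

lemma mdist_diff_le_distortion:
  assumes "diam_le X A" "diam_le Y B" "correspondence X Y R" "p \<in> R" "q \<in> R"
  shows "\<bar>mdist X (fst p) (fst q) - mdist Y (snd p) (snd q)\<bar> \<le> distortion X Y R"
  unfolding distortion_def
proof (rule cSup_upper)
  show "bdd_above {\<bar>mdist X (fst p) (fst q) - mdist Y (snd p) (snd q)\<bar> | p q. p \<in> R \<and> q \<in> R}"
  proof (rule bdd_aboveI, clarify)
    fix p q assume "p \<in> R" "q \<in> R"
    then have "p \<in> mspace X \<times> mspace Y" "q \<in> mspace X \<times> mspace Y"
      using assms(3) unfolding correspondence_def by blast+
    then have "mdist X (fst p) (fst q) \<le> A" "mdist Y (snd p) (snd q) \<le> B"
      using assms(1,2) unfolding diam_le_def by (auto simp: mem_Times_iff)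
    then show "\<bar>mdist X (fst p) (fst q) - mdist Y (snd p) (snd q)\<bar> \<le> A + B"
      unfolding abs_le_iff
      using mdist_nonneg[of X "fst p" "fst q"] mdist_nonneg[of Y "snd p" "snd q"] by linarith
  qed
qed (use assms in blast)

lemma distortion_le:
  assumes "R \<noteq> {}"
    and "\<And>p q. p \<in> R \<Longrightarrow> q \<in> R \<Longrightarrow> \<bar>mdist X (fst p) (fst q) - mdist Y (snd p) (snd q)\<bar> \<le> c"
  shows "distortion X Y R \<le> c"
  unfolding distortion_def
proof (rule cSup_least)
  show "{\<bar>mdist X (fst p) (fst q) - mdist Y (snd p) (snd q)\<bar> | p q. p \<in> R \<and> q \<in> R} \<noteq> {}"
    using assms(1) by blast
qed (use assms(2) in blast)

lemma less_distortion_imp_pair: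
  assumes "c < distortion X Y R" "R \<noteq> {}"
  obtains p q where "p \<in> R" "q \<in> R" "c < \<bar>mdist X (fst p) (fst q) - mdist Y (snd p) (snd q)\<bar>"
  by (meson assms distortion_le not_le that)

lemma distortion_converse: "distortion Y X (R\<inverse>) = distortion X Y R"
proof -
  have "{\<bar>mdist Y (fst p) (fst q) - mdist X (snd p) (snd q)\<bar> | p q. p \<in> R\<inverse> \<and> q \<in> R\<inverse>}
      = {\<bar>mdist X (fst p) (fst q) - mdist Y (snd p) (snd q)\<bar> | p q. p \<in> R \<and> q \<in> R}"
    by (force simp: abs_minus_commute)
  then show ?thesis unfolding distortion_def by simp
qed

context
  fixes X :: "'a metric" and Y :: "'b metric"
  assumes X: "bounded_ms X" and Y: "bounded_ms Y"
begin

lemma distortion_nonneg: "correspondence X Y R \<Longrightarrow> 0 \<le> distortion X Y R"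
  using X Y correspondence_nonempty[of X Y R] mdist_diff_le_distortion[of X _ Y _ R]
  unfolding bounded_ms_def by fastforce

lemma distortions_nonempty: "{distortion X Y R | R. correspondence X Y R} \<noteq> {}"
  using X Y correspondence_Times[of X Y] unfolding bounded_ms_def by blast

lemma inf_distortion_le: "correspondence X Y R \<Longrightarrow> inf_distortion X Y \<le> distortion X Y R"
  unfolding inf_distortion_def
  by (rule cInf_lower) (auto intro: bdd_belowI distortion_nonneg)

lemma inf_distortion_nonneg: "0 \<le> inf_distortion X Y"
  unfolding inf_distortion_def
  using distortions_nonempty by (auto intro: cInf_greatest distortion_nonneg)

lemma inf_distortion_greatest:
  "(\<And>R. correspondence X Y R \<Longrightarrow> c \<le> distortion X Y R) \<Longrightarrow> c \<le> inf_distortion X Y"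
  unfolding inf_distortion_def using distortions_nonempty by (auto intro: cInf_greatest)

lemma inf_distortion_approx:
  assumes "e > 0"
  obtains R where "correspondence X Y R" "distortion X Y R < inf_distortion X Y + e"
proof -
  have "Inf {distortion X Y R | R. correspondence X Y R} < inf_distortion X Y + e"
    using assms by (simp add: inf_distortion_def)
  then show ?thesis using cInf_lessD[OF distortions_nonempty] that by blast
qed

end

lemma inf_distortion_triangle:
  assumes X: "bounded_ms X" and Y: "bounded_ms Y" and Z: "bounded_ms Z"
  shows "inf_distortion X Z \<le> inf_distortion X Y + inf_distortion Y Z"
proof (rule field_le_epsilon)
  fix e :: real assume "e > 0"
  then have "e/2 > 0" by simp
  obtain R where R: "correspondence X Y R" "distortion X Y R < inf_distortion X Y + e/2"
    using inf_distortion_approx[OF X Y \<open>e/2 > 0\<close>] by blast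
  obtain S where S: "correspondence Y Z S" "distortion Y Z S < inf_distortion Y Z + e/2"
    using inf_distortion_approx[OF Y Z \<open>e/2 > 0\<close>] by blast
  obtain A B C where b: "diam_le X A" "diam_le Y B" "diam_le Z C"
    using X Y Z unfolding bounded_ms_def by blast
  have RS: "correspondence X Z (R O S)" by (rule correspondence_relcomp[OF R(1) S(1)])
  have "distortion X Z (R O S) \<le> distortion X Y R + distortion Y Z S"
  proof (rule distortion_le)
    show "R O S \<noteq> {}" using RS X correspondence_nonempty unfolding bounded_ms_def by blast
    fix p q assume "p \<in> R O S" "q \<in> R O S"
    then obtain y y' where "(fst p, y) \<in> R" "(y, snd p) \<in> S" "(fst q, y') \<in> R" "(y', snd q) \<in> S"
      by (auto simp: relcomp_unfold)
    then have "\<bar>mdist X (fst p) (fst q) - mdist Y y y'\<bar> \<le> distortion X Y R"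
      and "\<bar>mdist Y y y' - mdist Z (snd p) (snd q)\<bar> \<le> distortion Y Z S"
      using mdist_diff_le_distortion[OF b(1,2) R(1)] mdist_diff_le_distortion[OF b(2,3) S(1)]
      by fastforce+
    then show "\<bar>mdist X (fst p) (fst q) - mdist Z (snd p) (snd q)\<bar> \<le> distortion X Y R + distortion Y Z S"
      by linarith
  qed
  then show "inf_distortion X Z \<le> inf_distortion X Y + inf_distortion Y Z + e"
    using inf_distortion_le[OF X Z RS] R S by linarith
qed

lemma inf_distortion_commute:
  assumes "bounded_ms X" "bounded_ms Y"
  shows "inf_distortion X Y = inf_distortion Y X"
proof -
  have "inf_distortion Y X \<le> inf_distortion X Y"
    if X: "bounded_ms X" and Y: "bounded_ms Y" for X :: "'c metric" and Y :: "'d metric"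
  proof (rule inf_distortion_greatest[OF X Y])
    fix R assume "correspondence X Y R"
    then show "inf_distortion Y X \<le> distortion X Y R"
      using inf_distortion_le[OF Y X] correspondence_converse distortion_converse by metis
  qed
  then show ?thesis using assms by (meson order_antisym)
qed

lemma isometric_ms_refl: "isometric_ms X X"
  unfolding isometric_ms_def isometric_embedding_def by (intro exI[of _ id]) simp

lemma isometric_embedding_inj_on:
  assumes "isometric_embedding X Y f"
  shows "inj_on f (mspace X)"
proof (rule inj_onI)
  fix x y assume xy: "x \<in> mspace X" "y \<in> mspace X" "f x = f y"
  have "mdist X x y = mdist Y (f x) (f y)"
    using assms xy(1,2) unfolding isometric_embedding_def by simp
  also have "\<dots> = 0"
    using assms xy unfolding isometric_embedding_def by (simp add: image_subset_iff)
  finally show "x = y" using xy(1,2) by simp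
qed

lemma isometric_ms_sym:
  assumes "isometric_ms X Y"
  shows "isometric_ms Y X"
proof -
  obtain f where f: "isometric_embedding X Y f" "f ` mspace X = mspace Y"
    using assms unfolding isometric_ms_def by blast
  have inj: "inj_on f (mspace X)" by (rule isometric_embedding_inj_on[OF f(1)])
  have "isometric_embedding Y X (inv_into (mspace X) f)"
    unfolding isometric_embedding_def
  proof (intro conjI ballI)
    show "inv_into (mspace X) f ` mspace Y \<subseteq> mspace X"
      using f(2) by (auto intro: inv_into_into)
    fix u v assume "u \<in> mspace Y" "v \<in> mspace Y"
    then obtain a b where "a \<in> mspace X" "b \<in> mspace X" "u = f a" "v = f b" using f(2) by blast
    then show "mdist X (inv_into (mspace X) f u) (inv_into (mspace X) f v) = mdist Y u v"
      using f(1) inj unfolding isometric_embedding_def by (simp add: inv_into_f_f)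
  qed
  moreover have "inv_into (mspace X) f ` mspace Y = mspace X"
    using inv_into_image_cancel[OF inj order_refl] f(2) by simp
  ultimately show ?thesis unfolding isometric_ms_def by blast
qed

lemma isometric_ms_trans:
  assumes "isometric_ms X Y" "isometric_ms Y Z"
  shows "isometric_ms X Z"
proof -
  obtain f where f: "isometric_embedding X Y f" "f ` mspace X = mspace Y"
    using assms(1) unfolding isometric_ms_def by blast
  obtain g where g: "isometric_embedding Y Z g" "g ` mspace Y = mspace Z"
    using assms(2) unfolding isometric_ms_def by blast
  have im: "(g \<circ> f) ` mspace X = mspace Z"
    using f(2) g(2) by (metis image_comp)
  have "isometric_embedding X Z (g \<circ> f)"
    unfolding isometric_embedding_def
  proof (intro conjI ballI)
    show "(g \<circ> f) ` mspace X \<subseteq> mspace Z" using im by simp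
    fix x y assume "x \<in> mspace X" "y \<in> mspace X"
    moreover have "f x \<in> mspace Y" "f y \<in> mspace Y" using f calculation by blast+
    ultimately show "mdist Z ((g \<circ> f) x) ((g \<circ> f) y) = mdist X x y"
      using f g unfolding isometric_embedding_def by simp
  qed
  with im show ?thesis unfolding isometric_ms_def by blast
qed

lemma compactin_Lipschitz_image:
  assumes "compact_space (mtopology_of X)" "f ` mspace X \<subseteq> mspace W"
    and "\<And>x y. x \<in> mspace X \<Longrightarrow> y \<in> mspace X \<Longrightarrow> mdist W (f x) (f y) \<le> C * mdist X x y"
  shows "compactin (mtopology_of W) (f ` mspace X)"
proof -
  have "Lipschitz_continuous_map X W f"
    unfolding Lipschitz_continuous_map_def using assms(2,3) by blast
  then have "continuous_map (mtopology_of X) (mtopology_of W) f"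
    by (rule Lipschitz_continuous_imp_continuous_map)
  with assms(1) show ?thesis by (metis image_compactin compact_space_def topspace_mtopology_of)
qed

lemma compact_ms_isometric:
  assumes "compact_ms X" "isometric_ms X Y"
  shows "compact_ms Y"
proof -
  obtain f where f: "isometric_embedding X Y f" "f ` mspace X = mspace Y"
    using assms unfolding isometric_ms_def by blast
  have "compactin (mtopology_of Y) (f ` mspace X)"
    by (rule compactin_Lipschitz_image[where C = 1])
      (use assms(1) f in \<open>auto simp: compact_ms_def isometric_embedding_def\<close>)
  then show ?thesis using assms(1) f(2) by (auto simp: compact_ms_def compact_space_def)
qed

lemma inf_distortion_isometric_eq_0:
  assumes "bounded_ms X" "bounded_ms X'" "isometric_ms X X'"
  shows "inf_distortion X X' = 0"
proof -
  obtain f where f: "isometric_embedding X X' f" "f ` mspace X = mspace X'"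
    using assms unfolding isometric_ms_def by blast
  define R where "R = (\<lambda>x. (x, f x)) ` mspace X"
  have R: "correspondence X X' R"
    using f unfolding correspondence_def R_def isometric_embedding_def by (auto simp: image_iff)
  have "distortion X X' R \<le> 0"
    by (rule distortion_le)
      (use f assms(1) in \<open>auto simp: R_def isometric_embedding_def bounded_ms_def\<close>)
  then show ?thesis
    using inf_distortion_le[OF assms(1,2) R] inf_distortion_nonneg[OF assms(1,2)] by linarith
qed

lemma inf_distortion_isometric_left:
  assumes "bounded_ms X" "bounded_ms X'" "bounded_ms Y" "isometric_ms X X'"
  shows "inf_distortion X Y = inf_distortion X' Y"
proof -
  have "inf_distortion X X' = 0" "inf_distortion X' X = 0"
    using assms inf_distortion_isometric_eq_0 isometric_ms_sym by blast+
  then show ?thesis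
    using inf_distortion_triangle[of X X' Y] inf_distortion_triangle[of X' X Y] assms by linarith
qed

lemma inf_distortion_isometric_right:
  assumes "bounded_ms X" "bounded_ms Y" "bounded_ms Y'" "isometric_ms Y Y'"
  shows "inf_distortion X Y = inf_distortion X Y'"
  using inf_distortion_isometric_left[of Y Y' X] inf_distortion_commute assms by metis

text \<open>Representatives of points of the Gromov-Hausdorff space live on the reals; spaces built on
  other carriers are transported there along an injection.\<close>

definition metric_image :: "('a \<Rightarrow> 'b) \<Rightarrow> 'a metric \<Rightarrow> 'b metric" where
  "metric_image h W =
     metric (h ` mspace W, \<lambda>u v. mdist W (inv_into (mspace W) h u) (inv_into (mspace W) h v))"

context
  fixes h :: "'a \<Rightarrow> 'b" and W :: "'a metric"
  assumes inj: "inj_on h (mspace W)"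
begin

lemma Metric_space_metric_image:
  "Metric_space (h ` mspace W) (\<lambda>u v. mdist W (inv_into (mspace W) h u) (inv_into (mspace W) h v))"
proof
  fix x y
  show "mdist W (inv_into (mspace W) h x) (inv_into (mspace W) h y)
      = mdist W (inv_into (mspace W) h y) (inv_into (mspace W) h x)"
    by (rule mdist_commute)
next
  fix x y assume "x \<in> h ` mspace W" "y \<in> h ` mspace W"
  then show "(mdist W (inv_into (mspace W) h x) (inv_into (mspace W) h y) = 0) = (x = y)"
    using inj by (auto simp: inv_into_f_f inj_on_eq_iff)
next
  fix x y z assume "x \<in> h ` mspace W" "y \<in> h ` mspace W" "z \<in> h ` mspace W"
  then show "mdist W (inv_into (mspace W) h x) (inv_into (mspace W) h z)
        \<le> mdist W (inv_into (mspace W) h x) (inv_into (mspace W) h y)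
         + mdist W (inv_into (mspace W) h y) (inv_into (mspace W) h z)"
    by (intro mdist_triangle) (auto intro: inv_into_into)
qed simp

lemma mspace_metric_image: "mspace (metric_image h W) = h ` mspace W"
  unfolding metric_image_def using Metric_space.mspace_metric[OF Metric_space_metric_image] .

lemma mdist_metric_image:
  "a \<in> mspace W \<Longrightarrow> b \<in> mspace W \<Longrightarrow> mdist (metric_image h W) (h a) (h b) = mdist W a b"
  unfolding metric_image_def using Metric_space.mdist_metric[OF Metric_space_metric_image] inj
  by (simp add: inv_into_f_f)

lemma isometric_metric_image: "isometric_ms W (metric_image h W)"
  unfolding isometric_ms_def isometric_embedding_def
  using mspace_metric_image mdist_metric_image by blast

end

definition encode_tagged :: "real \<times> bool \<Rightarrow> real" where
  "encode_tagged p = arctan (fst p) + (if snd p then 4 else 0)"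

lemma inj_encode_tagged: "inj encode_tagged"
proof (rule injI)
  fix p q assume eq: "encode_tagged p = encode_tagged q"
  have b: "\<bar>arctan z\<bar> < 2" for z using arctan_bounded[of z] pi_less_4 by (simp add: abs_less_iff)
  have "snd p = snd q"
  proof (rule ccontr)
    assume "snd p \<noteq> snd q"
    then show False using eq b[of "fst p"] b[of "fst q"] unfolding encode_tagged_def
      by (cases "snd p"; cases "snd q") (simp_all add: abs_less_iff)
  qed
  moreover from this have "fst p = fst q"
    using eq unfolding encode_tagged_def by (simp add: arctan_eq_iff)
  ultimately show "p = q" by (simp add: prod_eq_iff)
qed

lemma hausdorff_dist_commute: "hausdorff_dist Z A B = hausdorff_dist Z B A"
  unfolding hausdorff_dist_def by (simp add: mdist_commute max.commute)

lemma SUP_INF_mdist_le: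
  assumes "A \<noteq> {}" "\<And>a. a \<in> A \<Longrightarrow> \<exists>b\<in>B. mdist Z a b \<le> r"
  shows "(SUP a\<in>A. INF b\<in>B. mdist Z a b) \<le> r"
proof (rule cSUP_least[OF assms(1)])
  fix a assume "a \<in> A"
  then obtain b where "b \<in> B" "mdist Z a b \<le> r" using assms(2) by blast
  then show "(INF b\<in>B. mdist Z a b) \<le> r"
    by (intro cINF_lower2[of _ _ b]) (auto intro: bdd_belowI[of _ 0])
qed

lemma hausdorff_dist_le:
  assumes "A \<noteq> {}" "B \<noteq> {}"
    and "\<And>a. a \<in> A \<Longrightarrow> \<exists>b\<in>B. mdist Z a b \<le> r" "\<And>b. b \<in> B \<Longrightarrow> \<exists>a\<in>A. mdist Z a b \<le> r"
  shows "hausdorff_dist Z A B \<le> r"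
  using SUP_INF_mdist_le[of A B Z r] SUP_INF_mdist_le[of B A Z r] assms
  unfolding hausdorff_dist_def by (simp add: mdist_commute)

lemma hausdorff_dist_le_imp_close:
  assumes "hausdorff_dist Z A B \<le> r" "B \<noteq> {}" "\<And>a b. a \<in> A \<Longrightarrow> b \<in> B \<Longrightarrow> mdist Z a b \<le> K"
    and "e > 0" "a \<in> A"
  shows "\<exists>b\<in>B. mdist Z a b < r + e"
proof -
  obtain b0 where b0: "b0 \<in> B" using assms(2) by blast
  have bdd: "bdd_below ((\<lambda>b. mdist Z a b) ` B)" for a by (auto intro: bdd_belowI[of _ 0])
  have "(INF b\<in>B. mdist Z a' b) \<le> K" if "a' \<in> A" for a'
    using cINF_lower2[OF bdd b0] assms(3)[OF that b0] by simp
  then have "(INF b\<in>B. mdist Z a b) \<le> (SUP a\<in>A. INF b\<in>B. mdist Z a b)"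
    by (intro cSUP_upper[OF assms(5)] bdd_aboveI) auto
  also have "\<dots> \<le> r" using assms(1) unfolding hausdorff_dist_def by simp
  finally have "(INF b\<in>B. mdist Z a b) < r + e" using assms(4) by simp
  then show ?thesis using cINF_less_iff[OF assms(2) bdd] by blast
qed

section \<open>Gluing two spaces along a correspondence\<close>

definition glue_gap :: "'a metric \<Rightarrow> 'b metric \<Rightarrow> ('a \<times> 'b) set \<Rightarrow> 'a \<Rightarrow> 'b \<Rightarrow> real" where
  "glue_gap X Y R x y = Inf {mdist X x a + mdist Y b y | a b. (a, b) \<in> R}"

text \<open>The standard gluing: \<open>R\<close>-related points end up at distance \<open>\<rho>\<close>, and the triangle
  inequality across the two spaces holds as long as \<open>dis R \<le> 2\<rho>\<close>.\<close>

definition glue_dist ::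
    "'a metric \<Rightarrow> 'b metric \<Rightarrow> ('a \<times> 'b) set \<Rightarrow> real \<Rightarrow> 'a + 'b \<Rightarrow> 'a + 'b \<Rightarrow> real" where
  "glue_dist X Y R \<rho> u v =
     (case (u, v) of
       (Inl x, Inl x') \<Rightarrow> mdist X x x'
     | (Inr y, Inr y') \<Rightarrow> mdist Y y y'
     | (Inl x, Inr y) \<Rightarrow> \<rho> + glue_gap X Y R x y
     | (Inr y, Inl x) \<Rightarrow> \<rho> + glue_gap X Y R x y)"

lemma glue_dist_simps [simp]:
  "glue_dist X Y R \<rho> (Inl x) (Inl x') = mdist X x x'"
  "glue_dist X Y R \<rho> (Inr y) (Inr y') = mdist Y y y'"
  "glue_dist X Y R \<rho> (Inl x) (Inr y) = \<rho> + glue_gap X Y R x y"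
  "glue_dist X Y R \<rho> (Inr y) (Inl x) = \<rho> + glue_gap X Y R x y"
  by (simp_all add: glue_dist_def)

definition glue_metric :: "'a metric \<Rightarrow> 'b metric \<Rightarrow> ('a \<times> 'b) set \<Rightarrow> real \<Rightarrow> ('a + 'b) metric" where
  "glue_metric X Y R \<rho> = metric (Inl ` mspace X \<union> Inr ` mspace Y, glue_dist X Y R \<rho>)"

lemma glue_gap_le: "(a, b) \<in> R \<Longrightarrow> glue_gap X Y R x y \<le> mdist X x a + mdist Y b y"
  unfolding glue_gap_def by (rule cInf_lower) (auto intro: bdd_belowI[of _ 0])

lemma glue_gap_greatest:
  assumes "R \<noteq> {}" "\<And>a b. (a, b) \<in> R \<Longrightarrow> c \<le> mdist X x a + mdist Y b y"
  shows "c \<le> glue_gap X Y R x y"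
  unfolding glue_gap_def using assms by (intro cInf_greatest) auto

locale glue =
  fixes X :: "'a metric" and Y :: "'b metric" and R :: "('a \<times> 'b) set" and \<rho> :: real
  assumes correspondence: "correspondence X Y R" and nonempty: "R \<noteq> {}" and pos: "\<rho> > 0"
    and distortion: "\<And>a b a' b'. (a, b) \<in> R \<Longrightarrow> (a', b') \<in> R \<Longrightarrow> \<bar>mdist X a a' - mdist Y b b'\<bar> \<le> 2 * \<rho>"
begin

abbreviation gap where "gap \<equiv> glue_gap X Y R"

lemma mem_R: "(a, b) \<in> R \<Longrightarrow> a \<in> mspace X \<and> b \<in> mspace Y"
  using correspondence unfolding correspondence_def by blast

lemma gap_nonneg: "0 \<le> gap x y"
  by (rule glue_gap_greatest[OF nonempty]) simp

lemma gap_le_left: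
  assumes "x \<in> mspace X" "x' \<in> mspace X"
  shows "gap x y \<le> mdist X x x' + gap x' y"
proof -
  have "gap x y - mdist X x x' \<le> gap x' y"
  proof (rule glue_gap_greatest[OF nonempty])
    fix a b assume ab: "(a, b) \<in> R"
    have "mdist X x a \<le> mdist X x x' + mdist X x' a"
      using assms mem_R[OF ab] by (simp add: mdist_triangle)
    with glue_gap_le[OF ab, of X Y x y]
    show "gap x y - mdist X x x' \<le> mdist X x' a + mdist Y b y" by linarith
  qed
  then show ?thesis by linarith
qed

lemma gap_le_right:
  assumes "y \<in> mspace Y" "y' \<in> mspace Y"
  shows "gap x y \<le> gap x y' + mdist Y y' y"
proof -
  have "gap x y - mdist Y y' y \<le> gap x y'"
  proof (rule glue_gap_greatest[OF nonempty])
    fix a b assume ab: "(a, b) \<in> R"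
    have "mdist Y b y \<le> mdist Y b y' + mdist Y y' y"
      using assms mem_R[OF ab] by (simp add: mdist_triangle)
    with glue_gap_le[OF ab, of X Y x y]
    show "gap x y - mdist Y y' y \<le> mdist X x a + mdist Y b y'" by linarith
  qed
  then show ?thesis by linarith
qed

lemma mdist_left_le_gap:
  assumes "x \<in> mspace X" "x' \<in> mspace X" "y \<in> mspace Y"
  shows "mdist X x x' \<le> 2 * \<rho> + gap x y + gap x' y"
proof -
  have "mdist X x x' - 2 * \<rho> - gap x y \<le> gap x' y"
  proof (rule glue_gap_greatest[OF nonempty])
    fix a' b' assume ab': "(a', b') \<in> R"
    have "mdist X x x' - 2 * \<rho> - mdist X x' a' - mdist Y b' y \<le> gap x y"
    proof (rule glue_gap_greatest[OF nonempty])
      fix a b assume ab: "(a, b) \<in> R"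
      have m: "a \<in> mspace X" "b \<in> mspace Y" "a' \<in> mspace X" "b' \<in> mspace Y"
        using mem_R[OF ab] mem_R[OF ab'] by auto
      have "mdist X x x' \<le> mdist X x a + mdist X a x'" "mdist X a x' \<le> mdist X a a' + mdist X a' x'"
        using m assms by (simp_all add: mdist_triangle)
      moreover have "mdist Y b b' \<le> mdist Y b y + mdist Y y b'"
        using m assms by (simp add: mdist_triangle)
      moreover have "mdist X a a' \<le> mdist Y b b' + 2 * \<rho>"
        using distortion[OF ab ab'] by linarith
      moreover have "mdist X a' x' = mdist X x' a'" "mdist Y y b' = mdist Y b' y"
        by (simp_all add: mdist_commute)
      ultimately show "mdist X x x' - 2 * \<rho> - mdist X x' a' - mdist Y b' y \<le> mdist X x a + mdist Y b y"
        by linarith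
    qed
    then show "mdist X x x' - 2 * \<rho> - gap x y \<le> mdist X x' a' + mdist Y b' y" by linarith
  qed
  then show ?thesis by linarith
qed

lemma mdist_right_le_gap:
  assumes "y \<in> mspace Y" "y' \<in> mspace Y" "x \<in> mspace X"
  shows "mdist Y y y' \<le> 2 * \<rho> + gap x y + gap x y'"
proof -
  have "mdist Y y y' - 2 * \<rho> - gap x y \<le> gap x y'"
  proof (rule glue_gap_greatest[OF nonempty])
    fix a' b' assume ab': "(a', b') \<in> R"
    have "mdist Y y y' - 2 * \<rho> - mdist X x a' - mdist Y b' y' \<le> gap x y"
    proof (rule glue_gap_greatest[OF nonempty])
      fix a b assume ab: "(a, b) \<in> R"
      have m: "a \<in> mspace X" "b \<in> mspace Y" "a' \<in> mspace X" "b' \<in> mspace Y"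
        using mem_R[OF ab] mem_R[OF ab'] by auto
      have "mdist Y y y' \<le> mdist Y y b + mdist Y b y'" "mdist Y b y' \<le> mdist Y b b' + mdist Y b' y'"
        using m assms by (simp_all add: mdist_triangle)
      moreover have "mdist X a a' \<le> mdist X a x + mdist X x a'"
        using m assms by (simp add: mdist_triangle)
      moreover have "mdist Y b b' \<le> mdist X a a' + 2 * \<rho>"
        using distortion[OF ab ab'] by linarith
      moreover have "mdist X a x = mdist X x a" "mdist Y y b = mdist Y b y"
        by (simp_all add: mdist_commute)
      ultimately show "mdist Y y y' - 2 * \<rho> - mdist X x a' - mdist Y b' y' \<le> mdist X x a + mdist Y b y"
        by linarith
    qed
    then show "mdist Y y y' - 2 * \<rho> - gap x y \<le> mdist X x a' + mdist Y b' y'" by linarith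
  qed
  then show ?thesis by linarith
qed

lemma Metric_space_glue: "Metric_space (Inl ` mspace X \<union> Inr ` mspace Y) (glue_dist X Y R \<rho>)"
proof
  fix u v :: "'a + 'b"
  show "0 \<le> glue_dist X Y R \<rho> u v"
    using gap_nonneg pos by (cases u; cases v) (auto intro: add_nonneg_nonneg)
  show "glue_dist X Y R \<rho> u v = glue_dist X Y R \<rho> v u"
    by (cases u; cases v) (auto simp: mdist_commute)
next
  fix u v assume "u \<in> Inl ` mspace X \<union> Inr ` mspace Y" "v \<in> Inl ` mspace X \<union> Inr ` mspace Y"
  moreover have "\<rho> + gap x y \<noteq> 0" for x y using gap_nonneg[of x y] pos by linarith
  ultimately show "(glue_dist X Y R \<rho> u v = 0) = (u = v)"
    by (cases u; cases v) auto
next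
  fix u v w assume "u \<in> Inl ` mspace X \<union> Inr ` mspace Y" "v \<in> Inl ` mspace X \<union> Inr ` mspace Y"
     "w \<in> Inl ` mspace X \<union> Inr ` mspace Y"
  then show "glue_dist X Y R \<rho> u w \<le> glue_dist X Y R \<rho> u v + glue_dist X Y R \<rho> v w"
    by (cases u; cases v; cases w)
      (auto simp: mdist_triangle,
       (smt (verit) gap_le_left gap_le_right mdist_left_le_gap mdist_right_le_gap mdist_commute)+)
qed

lemma mspace_glue_metric: "mspace (glue_metric X Y R \<rho>) = Inl ` mspace X \<union> Inr ` mspace Y"
  unfolding glue_metric_def using Metric_space.mspace_metric[OF Metric_space_glue] .

lemma mdist_glue_metric: "mdist (glue_metric X Y R \<rho>) = glue_dist X Y R \<rho>"
  unfolding glue_metric_def using Metric_space.mdist_metric[OF Metric_space_glue] .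

lemma gap_related:
  assumes "(x, y) \<in> R"
  shows "gap x y = 0"
proof -
  have "gap x y \<le> mdist X x x + mdist Y y y" by (rule glue_gap_le[OF assms])
  moreover have "mdist X x x = 0" "mdist Y y y = 0" using mem_R[OF assms] by simp_all
  ultimately show ?thesis using gap_nonneg[of x y] by simp
qed

end

lemma correspondence_imp_hausdorff_embedding:
  fixes X Y :: "real metric"
  assumes R: "correspondence X Y R" and ne: "mspace X \<noteq> {}" and pos: "\<rho> > 0"
    and dis: "\<And>a b a' b'. (a, b) \<in> R \<Longrightarrow> (a', b') \<in> R \<Longrightarrow> \<bar>mdist X a a' - mdist Y b b'\<bar> \<le> 2 * \<rho>"
  obtains Z :: "real metric" and f g where "isometric_embedding X Z f" "isometric_embedding Y Z g"
    "hausdorff_dist Z (f ` mspace X) (g ` mspace Y) \<le> \<rho>"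
proof -
  interpret glue X Y R \<rho>
    using R correspondence_nonempty[OF R ne] pos dis by unfold_locales auto
  define W where "W = glue_metric X Y R \<rho>"
  define h where "h = encode_tagged \<circ> case_sum (\<lambda>x. (x, False)) (\<lambda>y. (y, True))"
  have "inj (case_sum (\<lambda>x. (x, False)) (\<lambda>y. (y, True)) :: real + real \<Rightarrow> real \<times> bool)"
    by (rule injI) (auto split: sum.split_asm)
  then have "inj h" unfolding h_def by (rule inj_compose[OF inj_encode_tagged])
  then have inj: "inj_on h (mspace W)" by (rule inj_on_subset) simp
  define Z where "Z = metric_image h W"
  define f where "f = h \<circ> Inl"
  define g where "g = h \<circ> Inr"
  have MZ: "mspace Z = h ` mspace W"
    unfolding Z_def by (rule mspace_metric_image[OF inj])
  have dZ: "mdist Z (h u) (h v) = glue_dist X Y R \<rho> u v" if "u \<in> mspace W" "v \<in> mspace W" for u v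
    using mdist_metric_image[OF inj that] unfolding Z_def W_def mdist_glue_metric .
  have "isometric_embedding X Z f" "isometric_embedding Y Z g"
    unfolding isometric_embedding_def f_def g_def using dZ MZ by (auto simp: W_def mspace_glue_metric)
  moreover have "hausdorff_dist Z (f ` mspace X) (g ` mspace Y) \<le> \<rho>"
  proof (rule hausdorff_dist_le)
    show "f ` mspace X \<noteq> {}" "g ` mspace Y \<noteq> {}" using ne R unfolding correspondence_def by auto
  next
    have close: "mdist Z (f x) (g y) \<le> \<rho>" if "(x, y) \<in> R" for x y
      using dZ[of "Inl x" "Inr y"] gap_related[OF that] mem_R[OF that]
      by (simp add: f_def g_def W_def mspace_glue_metric)
    {
      fix a assume "a \<in> f ` mspace X"
      then obtain x y where "a = f x" "(x, y) \<in> R" using R unfolding correspondence_def by blast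
      then show "\<exists>b\<in>g ` mspace Y. mdist Z a b \<le> \<rho>" using close mem_R by blast
    next
      fix b assume "b \<in> g ` mspace Y"
      then obtain x y where "b = g y" "(x, y) \<in> R" using R unfolding correspondence_def by blast
      then show "\<exists>a\<in>f ` mspace X. mdist Z a b \<le> \<rho>" using close mem_R by blast
    }
  qed
  ultimately show ?thesis using that by blast
qed

section \<open>The Gromov-Hausdorff distance as an infimum of distortions\<close>

lemma abs_mdist_diff_le:
  assumes "a \<in> mspace Z" "a' \<in> mspace Z" "b \<in> mspace Z" "b' \<in> mspace Z"
  shows "\<bar>mdist Z a a' - mdist Z b b'\<bar> \<le> mdist Z a b + mdist Z a' b'"
proof -
  interpret Metric_space "mspace Z" "mdist Z" by simp
  have "mdist Z a a' \<le> mdist Z a b + mdist Z b b' + mdist Z a' b'"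
    using assms triangle[of a b a'] triangle'[of b b' a'] by linarith
  moreover have "mdist Z b b' \<le> mdist Z a b + mdist Z a a' + mdist Z a' b'"
    using assms triangle''[of b a b'] triangle[of a a' b'] by linarith
  ultimately show ?thesis by linarith
qed

lemma correspondence_hausdorff_close:
  assumes X: "bounded_ms X" and Y: "bounded_ms Y"
    and f: "isometric_embedding X Z f" and g: "isometric_embedding Y Z g"
    and h: "hausdorff_dist Z (f ` mspace X) (g ` mspace Y) \<le> r" and "e > 0"
  shows "correspondence X Y {(x, y). x \<in> mspace X \<and> y \<in> mspace Y \<and> mdist Z (f x) (g y) < r + e}"
proof -
  obtain BX BY where BX: "diam_le X BX" and BY: "diam_le Y BY"
    using X Y unfolding bounded_ms_def by blast
  obtain x0 y0 where x0: "x0 \<in> mspace X" and y0: "y0 \<in> mspace Y"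
    using X Y unfolding bounded_ms_def by blast
  define K where "K = BX + mdist Z (f x0) (g y0) + BY"
  have bounded: "mdist Z (f x) (g y) \<le> K" if xy: "x \<in> mspace X" "y \<in> mspace Y" for x y
  proof -
    have "mdist Z (f x) (g y) \<le> mdist Z (f x) (f x0) + mdist Z (f x0) (g y0) + mdist Z (g y) (g y0)"
      using abs_mdist_diff_le[of "f x" Z "g y" "f x0" "g y0"] f g xy x0 y0
      unfolding isometric_embedding_def by (simp add: abs_le_iff image_subset_iff)
    moreover have "mdist Z (f x) (f x0) \<le> BX" "mdist Z (g y) (g y0) \<le> BY"
      using f g BX BY xy x0 y0 unfolding isometric_embedding_def diam_le_def by auto
    ultimately show ?thesis unfolding K_def by linarith
  qed
  show ?thesis
    unfolding correspondence_def
  proof (intro conjI ballI)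
    fix x assume x: "x \<in> mspace X"
    have "\<exists>b\<in>g ` mspace Y. mdist Z (f x) b < r + e"
      by (rule hausdorff_dist_le_imp_close[OF h _ _ \<open>e > 0\<close>, where K = K])
        (use y0 x bounded in auto)
    then show "\<exists>y. (x, y) \<in> {(x, y). x \<in> mspace X \<and> y \<in> mspace Y \<and> mdist Z (f x) (g y) < r + e}"
      using x by blast
  next
    fix y assume y: "y \<in> mspace Y"
    have h': "hausdorff_dist Z (g ` mspace Y) (f ` mspace X) \<le> r"
      using h by (simp add: hausdorff_dist_commute)
    have "\<exists>a\<in>f ` mspace X. mdist Z (g y) a < r + e"
      by (rule hausdorff_dist_le_imp_close[OF h' _ _ \<open>e > 0\<close>, where K = K])
        (use x0 y bounded in \<open>auto simp: mdist_commute\<close>)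
    then show "\<exists>x. (x, y) \<in> {(x, y). x \<in> mspace X \<and> y \<in> mspace Y \<and> mdist Z (f x) (g y) < r + e}"
      using y by (auto simp: mdist_commute)
  qed auto
qed

lemma inf_distortion_le_hausdorff_dist:
  assumes X: "bounded_ms X" and Y: "bounded_ms Y"
    and f: "isometric_embedding X Z f" and g: "isometric_embedding Y Z g"
    and h: "hausdorff_dist Z (f ` mspace X) (g ` mspace Y) \<le> r"
  shows "inf_distortion X Y \<le> 2 * r"
proof (rule field_le_epsilon)
  fix e :: real assume "e > 0"
  define R where "R = {(x, y). x \<in> mspace X \<and> y \<in> mspace Y \<and> mdist Z (f x) (g y) < r + e/2}"
  have R: "correspondence X Y R"
    unfolding R_def using \<open>e > 0\<close> by (intro correspondence_hausdorff_close[OF X Y f g h]) simp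
  have "distortion X Y R \<le> 2 * r + e"
  proof (rule distortion_le)
    show "R \<noteq> {}" using correspondence_nonempty[OF R] X unfolding bounded_ms_def by blast
    fix p q assume "p \<in> R" "q \<in> R"
    then obtain x y x' y' where pq: "p = (x, y)" "q = (x', y')" "x \<in> mspace X" "y \<in> mspace Y"
      "x' \<in> mspace X" "y' \<in> mspace Y" "mdist Z (f x) (g y) < r + e/2" "mdist Z (f x') (g y') < r + e/2"
      unfolding R_def by auto
    then have "mdist X x x' = mdist Z (f x) (f x')" "mdist Y y y' = mdist Z (g y) (g y')"
      and "f x \<in> mspace Z" "f x' \<in> mspace Z" "g y \<in> mspace Z" "g y' \<in> mspace Z"
      using f g unfolding isometric_embedding_def by auto
    with abs_mdist_diff_le[of "f x" Z "f x'" "g y" "g y'"] pq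
    show "\<bar>mdist X (fst p) (fst q) - mdist Y (snd p) (snd q)\<bar> \<le> 2 * r + e" by simp
  qed
  then show "inf_distortion X Y \<le> 2 * r + e" using inf_distortion_le[OF X Y R] by linarith
qed

theorem dGH_eq_inf_distortion:
  fixes X Y :: "real metric"
  assumes X: "bounded_ms X" and Y: "bounded_ms Y"
  shows "dGH X Y = inf_distortion X Y / 2"
proof -
  define S where "S = {r. \<exists>(Z::real metric) f g. isometric_embedding X Z f \<and> isometric_embedding Y Z g
                       \<and> hausdorff_dist Z (f ` mspace X) (g ` mspace Y) \<le> r}"
  have lower: "inf_distortion X Y / 2 \<le> r" if "r \<in> S" for r
    using that inf_distortion_le_hausdorff_dist[OF X Y] unfolding S_def by fastforce
  have upper: "inf_distortion X Y / 2 + e \<in> S" if "e > 0" for e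
  proof -
    obtain R where R: "correspondence X Y R" "distortion X Y R < inf_distortion X Y + e"
      using inf_distortion_approx[OF X Y \<open>e > 0\<close>] by blast
    obtain BX BY where "diam_le X BX" "diam_le Y BY" using X Y unfolding bounded_ms_def by blast
    note mdist_diff_le_distortion[OF this R(1)]
    then have "\<bar>mdist X a a' - mdist Y b b'\<bar> \<le> 2 * (inf_distortion X Y / 2 + e)"
      if "(a, b) \<in> R" "(a', b') \<in> R" for a b a' b'
      using that R(2) \<open>e > 0\<close> by fastforce
    moreover have "inf_distortion X Y / 2 + e > 0"
      using inf_distortion_nonneg[OF X Y] \<open>e > 0\<close> by linarith
    moreover have "mspace X \<noteq> {}" using X unfolding bounded_ms_def by blast
    ultimately obtain Z :: "real metric" and f g where "isometric_embedding X Z f"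
      "isometric_embedding Y Z g" "hausdorff_dist Z (f ` mspace X) (g ` mspace Y) \<le> inf_distortion X Y / 2 + e"
      using correspondence_imp_hausdorff_embedding[OF R(1)] by blast
    then show ?thesis unfolding S_def by blast
  qed
  have "dGH X Y = Inf S" unfolding dGH_def S_def by simp
  also have "\<dots> = inf_distortion X Y / 2"
  proof (rule antisym)
    show "Inf S \<le> inf_distortion X Y / 2"
    proof (rule field_le_epsilon)
      fix e :: real assume "e > 0"
      show "Inf S \<le> inf_distortion X Y / 2 + e"
        by (rule cInf_lower[OF upper[OF \<open>e > 0\<close>] bdd_belowI[OF lower]])
    qed
    show "inf_distortion X Y / 2 \<le> Inf S"
      using upper[of 1] lower by (intro cInf_greatest) auto
  qed
  finally show ?thesis .
qed

lemma iso_class_eqI: "isometric_ms A B \<Longrightarrow> iso_class A = iso_class B"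
  unfolding iso_class_def using isometric_ms_sym isometric_ms_trans by blast

lemma iso_class_in_GH_space: "compact_ms X \<Longrightarrow> iso_class X \<in> GH_space"
  unfolding GH_space_def by blast

lemma isometric_rep_iso_class: "isometric_ms X (rep (iso_class X))"
proof -
  have "X \<in> iso_class X" using isometric_ms_refl unfolding iso_class_def by blast
  then have "rep (iso_class X) \<in> iso_class X" unfolding rep_def by (rule someI)
  then show ?thesis unfolding iso_class_def by blast
qed

lemma
  assumes "W \<in> GH_space"
  shows compact_ms_rep: "compact_ms (rep W)"
    and iso_class_rep: "iso_class (rep W) = W"
proof -
  obtain X where X: "W = iso_class X" "compact_ms X" using assms unfolding GH_space_def by blast
  then show "compact_ms (rep W)" using compact_ms_isometric isometric_rep_iso_class by blast
  show "iso_class (rep W) = W" using X iso_class_eqI[OF isometric_rep_iso_class] by metis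
qed

lemma dGH_M_eq_inf_distortion:
  assumes "A \<in> GH_space" "B \<in> GH_space"
  shows "dGH_M A B = inf_distortion (rep A) (rep B) / 2"
  unfolding dGH_M_def using dGH_eq_inf_distortion compact_ms_rep compact_ms_imp_bounded_ms assms by blast

definition GH_point :: "(real \<times> bool) metric \<Rightarrow> real metric set" where
  "GH_point X = iso_class (metric_image encode_tagged X)"

lemma isometric_metric_image_encode_tagged: "isometric_ms X (metric_image encode_tagged X)"
  by (rule isometric_metric_image) (simp add: inj_on_subset[OF inj_encode_tagged])

lemma isometric_GH_point: "isometric_ms X (rep (GH_point X))"
  unfolding GH_point_def
  by (rule isometric_ms_trans[OF isometric_metric_image_encode_tagged isometric_rep_iso_class])

lemma GH_point_in_GH_space: "compact_ms X \<Longrightarrow> GH_point X \<in> GH_space"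
  unfolding GH_point_def
  by (intro iso_class_in_GH_space compact_ms_isometric[OF _ isometric_metric_image_encode_tagged])

lemma GH_point_eqI: "isometric_ms X Y \<Longrightarrow> GH_point X = GH_point Y"
  unfolding GH_point_def
  by (meson iso_class_eqI isometric_ms_trans isometric_ms_sym isometric_metric_image_encode_tagged)

lemma dGH_M_GH_point:
  assumes "compact_ms X" "B \<in> GH_space"
  shows "dGH_M (GH_point X) B = inf_distortion X (rep B) / 2"
proof -
  have "compact_ms (rep (GH_point X))"
    using compact_ms_isometric[OF assms(1) isometric_GH_point] .
  then have "inf_distortion (rep (GH_point X)) (rep B) = inf_distortion X (rep B)"
    using inf_distortion_isometric_left isometric_ms_sym[OF isometric_GH_point] assms
      compact_ms_rep compact_ms_imp_bounded_ms by metis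
  then show ?thesis
    using dGH_M_eq_inf_distortion[OF GH_point_in_GH_space[OF assms(1)] assms(2)] by simp
qed

lemma openin_GH_topology:
  "openin GH_topology U \<longleftrightarrow> U \<subseteq> GH_space \<and> (\<forall>x\<in>U. \<exists>e>0. \<forall>y\<in>GH_space. dGH_M x y < e \<longrightarrow> y \<in> U)"
  unfolding GH_topology_def dist_topology_def
  using topology_inverse'[OF istopology_dist_topology[of GH_space dGH_M]] by simp

lemma topspace_GH_topology: "topspace GH_topology = GH_space"
proof -
  have "openin GH_topology GH_space" unfolding openin_GH_topology by (auto intro: exI[of _ 1])
  then show ?thesis using openin_GH_topology unfolding topspace_def by blast
qed

lemma dGH_M_nonneg:
  assumes "A \<in> GH_space" "B \<in> GH_space"
  shows "0 \<le> dGH_M A B"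
proof -
  have "0 \<le> inf_distortion (rep A) (rep B)"
    using assms by (intro inf_distortion_nonneg compact_ms_imp_bounded_ms compact_ms_rep)
  then show ?thesis using dGH_M_eq_inf_distortion[OF assms] by simp
qed

lemma pathin_GH_topologyI:
  assumes "\<And>t. t \<in> {0..1} \<Longrightarrow> g t \<in> GH_space"
    and "\<And>t. t \<in> {0..1} \<Longrightarrow> ((\<lambda>t'. dGH_M (g t) (g t')) \<longlongrightarrow> 0) (at t within {0..1})"
  shows "pathin GH_topology g"
  unfolding pathin_def continuous_map
proof (intro conjI allI impI)
  show "g ` topspace (top_of_set {0..1}) \<subseteq> topspace GH_topology"
    using assms(1) by (auto simp: topspace_GH_topology)
  fix U assume U: "openin GH_topology U"
  show "openin (top_of_set {0..1}) {x \<in> topspace (top_of_set {0..1}). g x \<in> U}"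
    unfolding openin_euclidean_subtopology_iff
  proof (intro conjI ballI)
    fix t assume "t \<in> {x \<in> topspace (top_of_set {0..1::real}). g x \<in> U}"
    then have t: "t \<in> {0..1}" "g t \<in> U" by auto
    then obtain e where "e > 0" and e: "\<forall>B\<in>GH_space. dGH_M (g t) B < e \<longrightarrow> B \<in> U"
      using U unfolding openin_GH_topology by blast
    obtain d where "d > 0" and d: "\<forall>t'\<in>{0..1}. t' \<noteq> t \<and> dist t' t < d \<longrightarrow> \<bar>dGH_M (g t) (g t')\<bar> < e"
      using tendstoD[OF assms(2)[OF t(1)] \<open>e > 0\<close>] unfolding eventually_at by auto
    show "\<exists>d>0. \<forall>t'\<in>{0..1}. dist t' t < d \<longrightarrow> t' \<in> {x \<in> topspace (top_of_set {0..1}). g x \<in> U}"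
      using \<open>d > 0\<close> d e assms(1) t(2) by (intro exI[of _ d]) auto
  qed auto
qed

lemma mdist_le_inf_distortion:
  assumes X: "bounded_ms X" and W: "bounded_ms W" and B: "diam_le X B"
    and w: "w \<in> mspace W" "w' \<in> mspace W"
  shows "mdist W w w' - B \<le> inf_distortion X W"
proof (rule inf_distortion_greatest[OF X W])
  fix R assume R: "correspondence X W R"
  obtain C where C: "diam_le W C" using W unfolding bounded_ms_def by blast
  obtain x x' where xx': "(x, w) \<in> R" "(x', w') \<in> R" using R w unfolding correspondence_def by blast
  then have "mdist X x x' \<le> B" using R B unfolding correspondence_def diam_le_def by blast
  with mdist_diff_le_distortion[OF B C R xx'] show "mdist W w w' - B \<le> distortion X W R" by simp
qed

lemma inf_distortion_le_diam:
  assumes X: "bounded_ms X" and W: "bounded_ms W" and B: "diam_le X B" and C: "diam_le W C"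
  shows "inf_distortion X W \<le> B + C"
proof -
  have R: "correspondence X W (mspace X \<times> mspace W)"
    using X W unfolding bounded_ms_def by (intro correspondence_Times) auto
  have "distortion X W (mspace X \<times> mspace W) \<le> B + C"
  proof (rule distortion_le)
    show "mspace X \<times> mspace W \<noteq> {}" using X W unfolding bounded_ms_def by auto
    fix p q assume "p \<in> mspace X \<times> mspace W" "q \<in> mspace X \<times> mspace W"
    then have "mdist X (fst p) (fst q) \<le> B" "mdist W (snd p) (snd q) \<le> C"
      using B C unfolding diam_le_def by auto
    then show "\<bar>mdist X (fst p) (fst q) - mdist W (snd p) (snd q)\<bar> \<le> B + C"
      unfolding abs_le_iff
      using mdist_nonneg[of X "fst p" "fst q"] mdist_nonneg[of W "snd p" "snd q"] by linarith
  qed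
  then show ?thesis using inf_distortion_le[OF X W R] by linarith
qed

text \<open>Once the distortion exceeds \<open>diam X\<close>, every nearly optimal pair of points is one where
  the distance in \<open>W\<close> dominates, and that distance is multiplied by \<open>k\<close>.\<close>

lemma inf_distortion_dilation:
  assumes X: "bounded_ms X" and W: "bounded_ms W" and W': "bounded_ms W'"
    and carrier: "mspace W' = mspace W"
    and dilation: "\<And>a b. a \<in> mspace W \<Longrightarrow> b \<in> mspace W \<Longrightarrow> mdist W' a b = k * mdist W a b"
    and k: "k \<ge> 1" and B: "diam_le X B" and big: "B < inf_distortion X W"
  shows "k * inf_distortion X W \<le> inf_distortion X W'"
proof (rule inf_distortion_greatest[OF X W'])
  fix R assume R': "correspondence X W' R"
  then have R: "correspondence X W R" using carrier unfolding correspondence_def by simp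
  have R_ne: "R \<noteq> {}" using correspondence_nonempty[OF R] X unfolding bounded_ms_def by blast
  obtain C' where C': "diam_le W' C'" using W' unfolding bounded_ms_def by blast
  have "c \<le> distortion X W' R / k" if c: "B < c" "c < inf_distortion X W" for c
  proof -
    have "c < distortion X W R" using c inf_distortion_le[OF X W R] by linarith
    then obtain p q where pq: "p \<in> R" "q \<in> R"
      and gap: "c < \<bar>mdist X (fst p) (fst q) - mdist W (snd p) (snd q)\<bar>"
      using less_distortion_imp_pair[OF _ R_ne] by blast
    have mem: "fst p \<in> mspace X" "fst q \<in> mspace X" "snd p \<in> mspace W" "snd q \<in> mspace W"
      using R pq unfolding correspondence_def by auto
    then have "mdist X (fst p) (fst q) \<le> B" using B unfolding diam_le_def by blast
    then have "c < mdist W (snd p) (snd q) - mdist X (fst p) (fst q)"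
      using gap c mdist_nonneg[of W "snd p" "snd q"] by linarith
    then have "k * c \<le> k * (mdist W (snd p) (snd q) - mdist X (fst p) (fst q))"
      using k by (intro mult_left_mono) auto
    also have "\<dots> \<le> k * mdist W (snd p) (snd q) - mdist X (fst p) (fst q)"
      using mult_right_mono[OF k mdist_nonneg[of X "fst p" "fst q"]] by (simp add: right_diff_distrib)
    also have "\<dots> \<le> distortion X W' R"
      using mdist_diff_le_distortion[OF B C' R' pq] dilation[OF mem(3,4)] by simp
    finally show ?thesis using k by (simp add: field_simps)
  qed
  then have "inf_distortion X W \<le> distortion X W' R / k"
    using big by (rule dense_le_bounded[rotated])
  then show "k * inf_distortion X W \<le> distortion X W' R" using k by (simp add: field_simps)
qed

section \<open>Deforming a space into a two-point space\<close>

text \<open>Points that \<open>interp_dist\<close> would not separate are identified by \<open>interp_point\<close>: at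
  \<open>t = 0\<close> only one copy of \<open>Y\<close> is kept, so the space is \<open>Y\<close> scaled by \<open>s\<close>; at \<open>t = 1\<close>
  each copy collapses to \<open>y0\<close>, leaving two points at distance \<open>s\<close>.\<close>

definition interp_point :: "'a \<Rightarrow> real \<Rightarrow> 'a \<times> bool \<Rightarrow> 'a \<times> bool" where
  "interp_point y0 t p = (if t = 1 then y0 else fst p, if t = 0 then False else snd p)"

definition interp_carrier :: "'a metric \<Rightarrow> 'a \<Rightarrow> real \<Rightarrow> ('a \<times> bool) set" where
  "interp_carrier Y y0 t = interp_point y0 t ` (mspace Y \<times> UNIV)"

definition interp_dist :: "'a metric \<Rightarrow> real \<Rightarrow> 'a \<times> bool \<Rightarrow> 'a \<times> bool \<Rightarrow> real" where
  "interp_dist Y t p q = (1 - t) * mdist Y (fst p) (fst q) + t * (if snd p = snd q then 0 else 1)"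

definition interp :: "'a metric \<Rightarrow> 'a \<Rightarrow> real \<Rightarrow> real \<Rightarrow> ('a \<times> bool) metric" where
  "interp Y y0 t s = metric (interp_carrier Y y0 t, \<lambda>p q. s * interp_dist Y t p q)"

lemma interp_carrier_memD:
  assumes "y0 \<in> mspace Y" "p \<in> interp_carrier Y y0 t"
  shows "fst p \<in> mspace Y" "t = 1 \<Longrightarrow> fst p = y0" "t = 0 \<Longrightarrow> snd p = False"
  using assms unfolding interp_carrier_def interp_point_def by auto

lemma interp_dist_nonneg: "0 \<le> t \<Longrightarrow> t \<le> 1 \<Longrightarrow> 0 \<le> interp_dist Y t p q"
  unfolding interp_dist_def by (intro add_nonneg_nonneg mult_nonneg_nonneg) auto

lemma interp_dist_le:
  assumes "diam_le Y D" "y0 \<in> mspace Y" "0 \<le> t" "t \<le> 1"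
    and "p \<in> interp_carrier Y y0 t" "q \<in> interp_carrier Y y0 t"
  shows "interp_dist Y t p q \<le> D + 1"
proof -
  have "0 \<le> D" using assms(1,2) diam_le_nonneg by blast
  moreover have "mdist Y (fst p) (fst q) \<le> D"
    using assms interp_carrier_memD[OF assms(2)] unfolding diam_le_def by auto
  ultimately have "(1 - t) * mdist Y (fst p) (fst q) \<le> 1 * D" using assms(3,4)
    by (intro mult_mono) auto
  then show ?thesis unfolding interp_dist_def using assms(3,4) by auto
qed

context
  fixes Y :: "'a metric" and y0 :: 'a and t s :: real
  assumes y0: "y0 \<in> mspace Y" and t: "0 \<le> t" "t \<le> 1" and s: "s > 0"
begin

lemma Metric_space_interp: "Metric_space (interp_carrier Y y0 t) (\<lambda>p q. s * interp_dist Y t p q)"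
proof
  fix p q
  show "0 \<le> s * interp_dist Y t p q" using interp_dist_nonneg[OF t, of Y p q] s by simp
  show "s * interp_dist Y t p q = s * interp_dist Y t q p"
    unfolding interp_dist_def by (simp add: mdist_commute eq_commute)
next
  fix p q assume pq: "p \<in> interp_carrier Y y0 t" "q \<in> interp_carrier Y y0 t"
  note mem = interp_carrier_memD[OF y0 pq(1)] interp_carrier_memD[OF y0 pq(2)]
  show "(s * interp_dist Y t p q = 0) = (p = q)"
  proof
    assume "s * interp_dist Y t p q = 0"
    then have "(1 - t) * mdist Y (fst p) (fst q) = 0" "t * (if snd p = snd q then 0 else 1 :: real) = 0"
      using s t mdist_nonneg[of Y "fst p" "fst q"] unfolding interp_dist_def
      by (simp_all add: add_nonneg_eq_0_iff)
    then have "fst p = fst q" using mem by (cases "t = 1") simp_all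
    moreover have "snd p = snd q"
      using \<open>t * _ = 0\<close> mem by (cases "t = 0") (simp_all split: if_splits)
    ultimately show "p = q" by (simp add: prod_eq_iff)
  qed (use mem in \<open>simp add: interp_dist_def\<close>)
next
  fix p q r
  assume "p \<in> interp_carrier Y y0 t" "q \<in> interp_carrier Y y0 t" "r \<in> interp_carrier Y y0 t"
  then have "mdist Y (fst p) (fst r) \<le> mdist Y (fst p) (fst q) + mdist Y (fst q) (fst r)"
    using interp_carrier_memD(1)[OF y0] by (simp add: mdist_triangle)
  then have "(1 - t) * mdist Y (fst p) (fst r)
      \<le> (1 - t) * mdist Y (fst p) (fst q) + (1 - t) * mdist Y (fst q) (fst r)"
    using t by (metis distrib_left diff_ge_0_iff_ge mult_left_mono)
  moreover have "t * (if snd p = snd r then 0 else 1 :: real)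
      \<le> t * (if snd p = snd q then 0 else 1) + t * (if snd q = snd r then 0 else 1)"
    using t by auto
  ultimately have "interp_dist Y t p r \<le> interp_dist Y t p q + interp_dist Y t q r"
    unfolding interp_dist_def by linarith
  then show "s * interp_dist Y t p r \<le> s * interp_dist Y t p q + s * interp_dist Y t q r"
    using s by (simp add: distrib_left[symmetric])
qed

lemma mspace_interp: "mspace (interp Y y0 t s) = interp_carrier Y y0 t"
  unfolding interp_def using Metric_space.mspace_metric[OF Metric_space_interp] .

lemma mdist_interp: "mdist (interp Y y0 t s) = (\<lambda>p q. s * interp_dist Y t p q)"
  unfolding interp_def using Metric_space.mdist_metric[OF Metric_space_interp] .

lemma compact_ms_interp:
  assumes "compact_ms Y"
  shows "compact_ms (interp Y y0 t s)"
proof -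
  have sheet: "compactin (mtopology_of (interp Y y0 t s)) ((\<lambda>y. interp_point y0 t (y, b)) ` mspace Y)"
    for b
  proof (rule compactin_Lipschitz_image[where C = s])
    show "compact_space (mtopology_of Y)" using assms unfolding compact_ms_def by blast
    show "(\<lambda>y. interp_point y0 t (y, b)) ` mspace Y \<subseteq> mspace (interp Y y0 t s)"
      unfolding mspace_interp interp_carrier_def by auto
    fix x y assume "x \<in> mspace Y" "y \<in> mspace Y"
    have "interp_dist Y t (interp_point y0 t (x, b)) (interp_point y0 t (y, b)) \<le> mdist Y x y"
    proof (cases "t = 1")
      case False
      then have "interp_dist Y t (interp_point y0 t (x, b)) (interp_point y0 t (y, b))
          = (1 - t) * mdist Y x y"
        unfolding interp_dist_def interp_point_def by simp
      also have "\<dots> \<le> 1 * mdist Y x y" using t by (intro mult_right_mono) auto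
      finally show ?thesis by simp
    qed (simp add: interp_dist_def interp_point_def)
    then show "mdist (interp Y y0 t s) (interp_point y0 t (x, b)) (interp_point y0 t (y, b))
        \<le> s * mdist Y x y"
      using s by (simp add: mdist_interp)
  qed
  have "mspace (interp Y y0 t s)
      = (\<lambda>y. interp_point y0 t (y, False)) ` mspace Y \<union> (\<lambda>y. interp_point y0 t (y, True)) ` mspace Y"
    unfolding mspace_interp interp_carrier_def by (auto simp: image_iff) (metis (full_types))
  then have "compactin (mtopology_of (interp Y y0 t s)) (mspace (interp Y y0 t s))"
    using sheet by (simp add: compactin_Un)
  moreover have "mspace (interp Y y0 t s) \<noteq> {}"
    using y0 unfolding mspace_interp interp_carrier_def by auto
  ultimately show ?thesis unfolding compact_ms_def compact_space_def by simp
qed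

lemma diam_le_interp:
  assumes "diam_le Y D"
  shows "diam_le (interp Y y0 t s) (s * (D + 1))"
  unfolding diam_le_def mspace_interp mdist_interp
  using interp_dist_le[OF assms y0 t] s by (simp add: mult_left_mono)

end

lemma abs_weighted_diff_le:
  fixes t t' a a' D :: real
  assumes "0 \<le> t" "t \<le> 1" "0 \<le> t'" "t' \<le> 1" "0 \<le> a" "a \<le> D" "0 \<le> a'" "a' \<le> D"
    and "a = a' \<or> t = 1 \<or> t' = 1"
  shows "\<bar>(1 - t) * a - (1 - t') * a'\<bar> \<le> \<bar>t - t'\<bar> * D"
proof -
  consider "t = 1" | "t' = 1" | "a = a'" using assms by blast
  then show ?thesis
  proof cases
    case 1
    have "0 \<le> (1 - t') * a'" "(1 - t') * a' \<le> (1 - t') * D"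
      using assms by (simp_all add: mult_left_mono)
    then show ?thesis using 1 assms by simp
  next
    case 2
    have "0 \<le> (1 - t) * a" "(1 - t) * a \<le> (1 - t) * D"
      using assms by (simp_all add: mult_left_mono)
    then show ?thesis using 2 assms by simp
  next
    case 3
    have "\<bar>(1 - t) * a - (1 - t') * a\<bar> = \<bar>t - t'\<bar> * a"
      by (simp add: left_diff_distrib[symmetric] abs_mult abs_minus_commute assms)
    also have "\<dots> \<le> \<bar>t - t'\<bar> * D" using assms by (intro mult_left_mono) auto
    finally show ?thesis using 3 by simp
  qed
qed

definition interp_corr :: "'a metric \<Rightarrow> 'a \<Rightarrow> real \<Rightarrow> real \<Rightarrow> (('a \<times> bool) \<times> ('a \<times> bool)) set" where
  "interp_corr Y y0 t t' = {(p, q). p \<in> interp_carrier Y y0 t \<and> q \<in> interp_carrier Y y0 t'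
     \<and> (fst p = fst q \<or> t = 1 \<or> t' = 1) \<and> (snd p = snd q \<or> t = 0 \<or> t' = 0)}"

lemma interp_corr_pair:
  "y \<in> mspace Y \<Longrightarrow> (interp_point y0 t (y, b), interp_point y0 t' (y, b)) \<in> interp_corr Y y0 t t'"
  unfolding interp_corr_def interp_carrier_def interp_point_def by auto

context
  fixes Y :: "'a metric" and y0 :: 'a and t t' :: real
  assumes y0: "y0 \<in> mspace Y" and t: "0 \<le> t" "t \<le> 1" and t': "0 \<le> t'" "t' \<le> 1"
begin

lemma correspondence_interp_corr:
  assumes "s > 0" "s' > 0"
  shows "correspondence (interp Y y0 t s) (interp Y y0 t' s') (interp_corr Y y0 t t')"
  unfolding correspondence_def mspace_interp[OF y0 t assms(1)] mspace_interp[OF y0 t' assms(2)]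
proof (intro conjI ballI)
  show "interp_corr Y y0 t t' \<subseteq> interp_carrier Y y0 t \<times> interp_carrier Y y0 t'"
    unfolding interp_corr_def by auto
next
  fix p assume "p \<in> interp_carrier Y y0 t"
  then obtain y b where "y \<in> mspace Y" "p = interp_point y0 t (y, b)"
    unfolding interp_carrier_def by auto
  then have "(p, interp_point y0 t' (y, b)) \<in> interp_corr Y y0 t t'" by (simp add: interp_corr_pair)
  then show "\<exists>q. (p, q) \<in> interp_corr Y y0 t t'" by blast
next
  fix q assume "q \<in> interp_carrier Y y0 t'"
  then obtain y b where "y \<in> mspace Y" "q = interp_point y0 t' (y, b)"
    unfolding interp_carrier_def by auto
  then have "(interp_point y0 t (y, b), q) \<in> interp_corr Y y0 t t'" by (simp add: interp_corr_pair)
  then show "\<exists>p. (p, q) \<in> interp_corr Y y0 t t'" by blast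
qed

lemma interp_dist_diff_le:
  assumes D: "diam_le Y D" and pq: "(p, q) \<in> interp_corr Y y0 t t'" "(p', q') \<in> interp_corr Y y0 t t'"
  shows "\<bar>interp_dist Y t p p' - interp_dist Y t' q q'\<bar> \<le> \<bar>t - t'\<bar> * (D + 1)"
proof -
  have mem: "p \<in> interp_carrier Y y0 t" "p' \<in> interp_carrier Y y0 t"
      "q \<in> interp_carrier Y y0 t'" "q' \<in> interp_carrier Y y0 t'"
    using pq unfolding interp_corr_def by auto
  let ?a = "mdist Y (fst p) (fst p')" and ?a' = "mdist Y (fst q) (fst q')"
  have "?a \<le> D" "?a' \<le> D"
    using D interp_carrier_memD(1)[OF y0] mem unfolding diam_le_def by blast+
  moreover have "?a = ?a' \<or> t = 1 \<or> t' = 1" using pq unfolding interp_corr_def by auto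
  ultimately have A: "\<bar>(1 - t) * ?a - (1 - t') * ?a'\<bar> \<le> \<bar>t - t'\<bar> * D"
    using abs_weighted_diff_le t t' by simp
  have "(snd p = snd p') = (snd q = snd q') \<or> t = 0 \<or> t' = 0"
    using pq unfolding interp_corr_def by auto
  then have B: "\<bar>t * (if snd p = snd p' then 0 else 1) - t' * (if snd q = snd q' then 0 else 1)\<bar>
      \<le> \<bar>t - t'\<bar>"
    using t t' by (auto simp: abs_if)
  have "\<bar>interp_dist Y t p p' - interp_dist Y t' q q'\<bar>
      \<le> \<bar>(1 - t) * ?a - (1 - t') * ?a'\<bar>
        + \<bar>t * (if snd p = snd p' then 0 else 1) - t' * (if snd q = snd q' then 0 else 1)\<bar>"
    unfolding interp_dist_def by (rule order_trans[OF eq_refl abs_triangle_ineq]) simp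
  also have "\<dots> \<le> \<bar>t - t'\<bar> * (D + 1)" using A B by (simp add: distrib_left)
  finally show ?thesis .
qed

lemma inf_distortion_interp_le:
  assumes Y: "compact_ms Y" and D: "diam_le Y D" and s: "s > 0" and s': "s' > 0"
  shows "inf_distortion (interp Y y0 t s) (interp Y y0 t' s') \<le> (D + 1) * (\<bar>s - s'\<bar> + s' * \<bar>t - t'\<bar>)"
proof -
  let ?R = "interp_corr Y y0 t t'"
  have "distortion (interp Y y0 t s) (interp Y y0 t' s') ?R \<le> (D + 1) * (\<bar>s - s'\<bar> + s' * \<bar>t - t'\<bar>)"
  proof (rule distortion_le)
    show "?R \<noteq> {}" using interp_corr_pair[OF y0, where b = False] by blast
    fix pq pq' assume pq: "pq \<in> ?R" "pq' \<in> ?R"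
    obtain p q p' q' where eq: "pq = (p, q)" "pq' = (p', q')" by (cases pq, cases pq')
    let ?d = "interp_dist Y t p p'" and ?d' = "interp_dist Y t' q q'"
    have corr: "(p, q) \<in> ?R" "(p', q') \<in> ?R" using pq eq by simp_all
    then have "p \<in> interp_carrier Y y0 t" "p' \<in> interp_carrier Y y0 t"
      unfolding interp_corr_def by simp_all
    then have d: "0 \<le> ?d" "?d \<le> D + 1"
      using interp_dist_nonneg[OF t] interp_dist_le[OF D y0 t] by simp_all
    have diff: "\<bar>?d - ?d'\<bar> \<le> \<bar>t - t'\<bar> * (D + 1)" by (rule interp_dist_diff_le[OF D corr])
    have "s * ?d - s' * ?d' = (s - s') * ?d + s' * (?d - ?d')" by (simp add: algebra_simps)
    then have "\<bar>s * ?d - s' * ?d'\<bar> \<le> \<bar>s - s'\<bar> * ?d + s' * \<bar>?d - ?d'\<bar>"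
      using abs_triangle_ineq[of "(s - s') * ?d" "s' * (?d - ?d')"] d s' by (simp add: abs_mult)
    also have "\<dots> \<le> \<bar>s - s'\<bar> * (D + 1) + s' * (\<bar>t - t'\<bar> * (D + 1))"
      using d(2) diff s' by (intro add_mono mult_left_mono) simp_all
    also have "\<dots> = (D + 1) * (\<bar>s - s'\<bar> + s' * \<bar>t - t'\<bar>)" by (simp add: algebra_simps)
    finally show "\<bar>mdist (interp Y y0 t s) (fst pq) (fst pq') - mdist (interp Y y0 t' s') (snd pq) (snd pq')\<bar>
        \<le> (D + 1) * (\<bar>s - s'\<bar> + s' * \<bar>t - t'\<bar>)"
      using eq mdist_interp[OF y0 t s] mdist_interp[OF y0 t' s'] by simp
  qed
  moreover have "bounded_ms (interp Y y0 t s)" "bounded_ms (interp Y y0 t' s')"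
    using compact_ms_interp[OF y0 t s Y] compact_ms_interp[OF y0 t' s' Y]
    by (simp_all add: compact_ms_imp_bounded_ms)
  note inf_distortion_le[OF this correspondence_interp_corr[OF s s']]
  ultimately show ?thesis by linarith
qed

end

lemma isometric_interp_0:
  assumes y0: "y0 \<in> mspace Y"
  shows "isometric_ms Y (interp Y y0 0 1)"
proof -
  have "interp_carrier Y y0 0 = (\<lambda>y. (y, False)) ` mspace Y"
    unfolding interp_carrier_def interp_point_def by force
  then have "mspace (interp Y y0 0 1) = (\<lambda>y. (y, False)) ` mspace Y"
    using mspace_interp[OF y0, of 0 1] by simp
  moreover have "mdist (interp Y y0 0 1) = interp_dist Y 0"
    using mdist_interp[OF y0, of 0 1] by simp
  ultimately show ?thesis
    unfolding isometric_ms_def isometric_embedding_def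
    by (intro exI[of _ "\<lambda>y. (y, False)"]) (simp add: interp_dist_def)
qed

lemma interp_carrier_1: "y0 \<in> mspace Y \<Longrightarrow> interp_carrier Y y0 1 = {y0} \<times> UNIV"
  unfolding interp_carrier_def interp_point_def by force

lemma isometric_interp_1:
  assumes y1: "y1 \<in> mspace Y1" and y2: "y2 \<in> mspace Y2" and s: "s > 0"
  shows "isometric_ms (interp Y1 y1 1 s) (interp Y2 y2 1 s)"
  unfolding isometric_ms_def isometric_embedding_def
    mspace_interp[OF y1 zero_le_one order_refl s] mspace_interp[OF y2 zero_le_one order_refl s]
    mdist_interp[OF y1 zero_le_one order_refl s] mdist_interp[OF y2 zero_le_one order_refl s]
    interp_carrier_1[OF y1] interp_carrier_1[OF y2]
  by (intro exI[of _ "\<lambda>p. (y2, snd p)"]) (force simp: interp_dist_def)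

section \<open>Joining a point of the sphere to a two-point space\<close>

locale sphere_point =
  fixes G :: "real metric" and d r :: real and Y :: "real metric" and y0 :: real
  assumes G: "compact_ms G" and diam_G: "diam_le G d" and radius: "d < 2 * r"
    and Y: "compact_ms Y" and y0: "y0 \<in> mspace Y" and on_sphere: "inf_distortion G Y = 2 * r"
begin

definition level :: "real \<Rightarrow> real \<Rightarrow> real" where
  "level t s = inf_distortion G (interp Y y0 t s)"

abbreviation "D \<equiv> mdiam Y"

lemma bounded_G: "bounded_ms G"
  using compact_ms_imp_bounded_ms[OF G] .

lemma diam_Y: "diam_le Y D"
  using diam_le_mdiam[OF compact_ms_imp_bounded_ms[OF Y]] .

lemma D_nonneg: "0 \<le> D"
  using diam_le_nonneg[OF diam_Y] y0 by blast

lemma d_nonneg: "0 \<le> d"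
  using diam_le_nonneg[OF diam_G] bounded_G unfolding bounded_ms_def by blast

lemma bounded_interp: "0 \<le> t \<Longrightarrow> t \<le> 1 \<Longrightarrow> s > 0 \<Longrightarrow> bounded_ms (interp Y y0 t s)"
  using compact_ms_imp_bounded_ms[OF compact_ms_interp[OF y0 _ _ _ Y]] .

lemma level_Lipschitz:
  assumes t: "0 \<le> t" "t \<le> 1" and t': "0 \<le> t'" "t' \<le> 1" and s: "s > 0" and s': "s' > 0"
  shows "\<bar>level t s - level t' s'\<bar> \<le> (D + 1) * (\<bar>s - s'\<bar> + s' * \<bar>t - t'\<bar>)"
proof -
  note b = bounded_interp[OF t s] bounded_interp[OF t' s']
  have "inf_distortion (interp Y y0 t' s') (interp Y y0 t s)
      = inf_distortion (interp Y y0 t s) (interp Y y0 t' s')"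
    using inf_distortion_commute[OF b] ..
  then show ?thesis
    using inf_distortion_triangle[OF bounded_G b(1) b(2)] inf_distortion_triangle[OF bounded_G b(2) b(1)]
      inf_distortion_interp_le[OF y0 t t' Y diam_Y s s']
    unfolding level_def by (simp add: abs_le_iff)
qed

lemma continuous_on_level_left:
  assumes "0 \<le> t" "t \<le> 1"
  shows "continuous_on {0<..} (level t)"
proof (rule lipschitz_on_continuous_on[OF lipschitz_onI])
  fix s s' :: real assume "s \<in> {0<..}" "s' \<in> {0<..}"
  then show "dist (level t s) (level t s') \<le> (D + 1) * dist s s'"
    using level_Lipschitz[OF assms assms, of s s'] by (simp add: dist_real_def)
qed (use D_nonneg in simp)

lemma continuous_on_level_right:
  assumes "s > 0"
  shows "continuous_on {0..1} (\<lambda>t. level t s)"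
proof (rule lipschitz_on_continuous_on[OF lipschitz_onI])
  fix t t' :: real assume "t \<in> {0..1}" "t' \<in> {0..1}"
  then show "dist (level t s) (level t' s) \<le> ((D + 1) * s) * dist t t'"
    using level_Lipschitz[of t t' s s] assms by (simp add: dist_real_def mult.assoc)
qed (use D_nonneg assms in simp)

lemma level_le:
  assumes "0 \<le> t" "t \<le> 1" "s > 0"
  shows "level t s \<le> d + s * (D + 1)"
  unfolding level_def
  by (rule inf_distortion_le_diam[OF bounded_G bounded_interp[OF assms] diam_G
        diam_le_interp[OF y0 assms diam_Y]])

lemma level_ge:
  assumes t: "0 \<le> t" "t \<le> 1"
  obtains c where "c > 0" "\<And>s. s > 0 \<Longrightarrow> s * c - d \<le> level t s"
proof -
  obtain y1 where y1: "y1 \<in> mspace Y" "y1 \<noteq> y0"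
  proof (rule ccontr)
    assume "\<not> thesis"
    then have "mspace Y = {y0}" using that y0 by blast
    then have "diam_le Y 0" unfolding diam_le_def by (metis mdist_zero order_refl singletonD)
    from inf_distortion_le_diam[OF bounded_G compact_ms_imp_bounded_ms[OF Y] diam_G this]
    show False using on_sphere radius d_nonneg by simp
  qed
  txt \<open>Two points at positive distance in every member of the family: distinct points of
    \<open>Y\<close> at \<open>t = 0\<close>, the two copies of \<open>y0\<close> otherwise.\<close>
  define p where "p = interp_point y0 t (y0, False)"
  define q where "q = interp_point y0 t (if t = 0 then y1 else y0, True)"
  have pq: "p \<in> interp_carrier Y y0 t" "q \<in> interp_carrier Y y0 t"
    unfolding p_def q_def interp_carrier_def using y0 y1 by auto
  have "mdist Y y0 y0 = 0" "mdist Y y0 y1 > 0" using y0 y1 by (simp_all add: order_less_le)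
  then have "interp_dist Y t p q > 0"
    using t unfolding p_def q_def interp_dist_def interp_point_def by auto
  moreover have "s * interp_dist Y t p q - d \<le> level t s" if "s > 0" for s
    using mdist_le_inf_distortion[OF bounded_G bounded_interp[OF t that] diam_G]
      pq mspace_interp[OF y0 t that] mdist_interp[OF y0 t that]
    unfolding level_def by simp
  ultimately show ?thesis using that by (simp add: mult.commute)
qed

lemma level_dilation:
  assumes t: "0 \<le> t" "t \<le> 1" and s: "s > 0" and k: "k \<ge> 1" and big: "d < level t s"
  shows "k * level t s \<le> level t (k * s)"
  unfolding level_def
proof (rule inf_distortion_dilation[OF bounded_G bounded_interp[OF t s] bounded_interp[OF t] _ _ k diam_G])
  show "0 < k * s" using s k by simp
  then show "mspace (interp Y y0 t (k * s)) = mspace (interp Y y0 t s)"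
    using mspace_interp[OF y0 t s] mspace_interp[OF y0 t] by simp
  fix a b show "mdist (interp Y y0 t (k * s)) a b = k * mdist (interp Y y0 t s) a b"
    using mdist_interp[OF y0 t s] mdist_interp[OF y0 t \<open>0 < k * s\<close>] by simp
qed (use big level_def in simp)

lemma level_strict_mono:
  assumes t: "0 \<le> t" "t \<le> 1" and s: "0 < s" "s < s'" and big: "d < level t s"
  shows "level t s < level t s'"
proof -
  have "s' / s * level t s \<le> level t (s' / s * s)"
    using s by (intro level_dilation[OF t s(1) _ big]) simp
  moreover have "level t s < s' / s * level t s"
    using s big d_nonneg by (simp add: field_simps)
  ultimately show ?thesis using s by simp
qed

lemma ex_level_eq:
  assumes t: "0 \<le> t" "t \<le> 1"
  shows "\<exists>s>0. level t s = 2 * r"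
proof -
  obtain c where c: "c > 0" "\<And>s. s > 0 \<Longrightarrow> s * c - d \<le> level t s" using level_ge[OF t] by blast
  define a where "a = (2 * r - d) / (2 * (D + 1))"
  define b where "b = max a ((2 * r + d) / c)"
  have a: "a > 0" unfolding a_def using radius d_nonneg D_nonneg by simp
  have "2 * (a * (D + 1)) = 2 * r - d" unfolding a_def using D_nonneg by (simp add: field_simps)
  then have "level t a \<le> 2 * r" using level_le[OF t a] radius d_nonneg by linarith
  moreover have "2 * r \<le> level t b"
  proof -
    have "(2 * r + d) / c * c \<le> b * c" unfolding b_def using c(1) by (intro mult_right_mono) auto
    then have "2 * r + d \<le> b * c" using c(1) by simp
    moreover have "b > 0" using a unfolding b_def by linarith
    ultimately show ?thesis using c(2)[of b] by linarith
  qed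
  moreover have "continuous_on {a..b} (level t)"
    by (rule continuous_on_subset[OF continuous_on_level_left[OF t]]) (use a in auto)
  ultimately obtain s where "a \<le> s" "level t s = 2 * r"
    using IVT'[of "level t" a "2 * r" b] unfolding b_def by auto
  then show ?thesis using a by (intro exI[of _ s]) auto
qed

text \<open>The factor that puts the deformed space back on the sphere. It is unique because
  \<open>level t\<close> increases strictly above \<open>d\<close> (by dilation), and \<open>d < 2 r\<close>.\<close>

definition scale :: "real \<Rightarrow> real" where
  "scale t = (THE s. s > 0 \<and> level t s = 2 * r)"

lemma level_eq_unique:
  assumes t: "0 \<le> t" "t \<le> 1" and "s > 0" "level t s = 2 * r" "s' > 0" "level t s' = 2 * r"
  shows "s = s'"
proof (rule ccontr)
  assume "s \<noteq> s'"
  then consider "s < s'" | "s' < s" by linarith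
  then show False
    using level_strict_mono[OF t, of s s'] level_strict_mono[OF t, of s' s] assms radius d_nonneg
    by cases auto
qed

lemma
  assumes "0 \<le> t" "t \<le> 1"
  shows scale_pos: "scale t > 0" and level_scale: "level t (scale t) = 2 * r"
proof -
  have "\<exists>!s. s > 0 \<and> level t s = 2 * r"
    using ex_level_eq[OF assms] level_eq_unique[OF assms] by blast
  then have "scale t > 0 \<and> level t (scale t) = 2 * r"
    unfolding scale_def by (rule theI')
  then show "scale t > 0" "level t (scale t) = 2 * r" by auto
qed

lemma scale_eqI: "0 \<le> t \<Longrightarrow> t \<le> 1 \<Longrightarrow> s > 0 \<Longrightarrow> level t s = 2 * r \<Longrightarrow> scale t = s"
  using level_eq_unique scale_pos level_scale by blast

lemma level_less_of_less_scale:
  assumes t: "0 \<le> t" "t \<le> 1" and s: "0 < s" "s < scale t"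
  shows "level t s < 2 * r"
proof (cases "d < level t s")
  case True
  then show ?thesis using level_strict_mono[OF t s True] level_scale[OF t] by simp
qed (use radius d_nonneg in simp)

lemma level_greater_of_greater_scale:
  assumes t: "0 \<le> t" "t \<le> 1" and s: "scale t < s"
  shows "2 * r < level t s"
  using level_strict_mono[OF t scale_pos[OF t] s] level_scale[OF t] radius d_nonneg by simp

lemma level_less_iff:
  assumes t: "0 \<le> t" "t \<le> 1" and s: "s > 0"
  shows "level t s < 2 * r \<longleftrightarrow> s < scale t"
  using level_less_of_less_scale[OF t s] level_greater_of_greater_scale[OF t, of s] level_scale[OF t]
  by (cases s "scale t" rule: linorder_cases) auto

lemma level_greater_iff:
  assumes t: "0 \<le> t" "t \<le> 1" and s: "s > 0"
  shows "2 * r < level t s \<longleftrightarrow> scale t < s"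
  using level_less_of_less_scale[OF t s] level_greater_of_greater_scale[OF t, of s] level_scale[OF t]
  by (cases s "scale t" rule: linorder_cases) auto

lemma continuous_on_scale: "continuous_on {0..1} scale"
  unfolding continuous_on_def
proof
  fix t0 :: real assume "t0 \<in> {0..1}"
  then have t0: "0 \<le> t0" "t0 \<le> 1" by auto
  have inside: "\<forall>\<^sub>F t in at t0 within {0..1}. t \<in> {0..1}" by (simp add: eventually_at_filter)
  have level_tendsto: "((\<lambda>t. level t s) \<longlongrightarrow> level t0 s) (at t0 within {0..1})" if "s > 0" for s
    using continuous_on_level_right[OF that] \<open>t0 \<in> {0..1}\<close> unfolding continuous_on_def by blast
  show "(scale \<longlongrightarrow> scale t0) (at t0 within {0..1})"
  proof (rule order_tendstoI)
    fix a assume "a < scale t0"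
    define s where "s = max a (scale t0 / 2)"
    have s: "0 < s" "s < scale t0" using \<open>a < scale t0\<close> scale_pos[OF t0] unfolding s_def by auto
    have "a < scale t" if "t \<in> {0..1}" "level t s < 2 * r" for t
    proof -
      have "s < scale t" using level_less_iff[of t s] that s(1) by simp
      moreover have "a \<le> s" unfolding s_def by simp
      ultimately show ?thesis by linarith
    qed
    moreover have "level t0 s < 2 * r" using level_less_iff[OF t0 s(1)] s(2) by simp
    then have "\<forall>\<^sub>F t in at t0 within {0..1}. t \<in> {0..1} \<and> level t s < 2 * r"
      by (intro eventually_conj inside order_tendstoD(2)[OF level_tendsto[OF s(1)]])
    ultimately show "\<forall>\<^sub>F t in at t0 within {0..1}. a < scale t"
      by (simp add: eventually_mono)
  next
    fix a assume "scale t0 < a"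
    then have a: "a > 0" "2 * r < level t0 a"
      using scale_pos[OF t0] level_greater_iff[OF t0] by auto
    then have "\<forall>\<^sub>F t in at t0 within {0..1}. t \<in> {0..1} \<and> 2 * r < level t a"
      by (intro eventually_conj inside order_tendstoD(1)[OF level_tendsto[OF a(1)]])
    then show "\<forall>\<^sub>F t in at t0 within {0..1}. scale t < a"
      by (rule eventually_mono) (use level_greater_iff[OF _ _ a(1)] in auto)
  qed
qed

definition spoke :: "real \<Rightarrow> real metric set" where
  "spoke t = GH_point (interp Y y0 t (scale t))"

lemma compact_ms_interp_scale: "0 \<le> t \<Longrightarrow> t \<le> 1 \<Longrightarrow> compact_ms (interp Y y0 t (scale t))"
  using compact_ms_interp[OF y0 _ _ scale_pos Y] by blast

lemma spoke_in_GH_space: "0 \<le> t \<Longrightarrow> t \<le> 1 \<Longrightarrow> spoke t \<in> GH_space"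
  unfolding spoke_def using GH_point_in_GH_space compact_ms_interp_scale by blast

lemma inf_distortion_spoke:
  assumes "0 \<le> t" "t \<le> 1"
  shows "inf_distortion G (rep (spoke t)) = 2 * r"
proof -
  have c: "compact_ms (interp Y y0 t (scale t))" by (rule compact_ms_interp_scale[OF assms])
  have iso: "isometric_ms (interp Y y0 t (scale t)) (rep (spoke t))"
    unfolding spoke_def by (rule isometric_GH_point)
  have "level t (scale t) = inf_distortion G (rep (spoke t))"
    unfolding level_def
    by (rule inf_distortion_isometric_right[OF bounded_G compact_ms_imp_bounded_ms[OF c]
          compact_ms_imp_bounded_ms[OF compact_ms_isometric[OF c iso]] iso])
  then show ?thesis using level_scale[OF assms] by simp
qed

lemma dGH_M_spoke_le:
  assumes t: "0 \<le> t" "t \<le> 1" and t': "0 \<le> t'" "t' \<le> 1"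
  shows "dGH_M (spoke t) (spoke t') \<le> (D + 1) * (\<bar>scale t - scale t'\<bar> + scale t' * \<bar>t - t'\<bar>) / 2"
proof -
  have "dGH_M (spoke t) (spoke t') = inf_distortion (interp Y y0 t (scale t)) (rep (spoke t')) / 2"
    unfolding spoke_def[of t] by (rule dGH_M_GH_point[OF compact_ms_interp_scale[OF t] spoke_in_GH_space[OF t']])
  also have "inf_distortion (interp Y y0 t (scale t)) (rep (spoke t'))
      = inf_distortion (interp Y y0 t (scale t)) (interp Y y0 t' (scale t'))"
  proof -
    have c: "compact_ms (interp Y y0 t' (scale t'))" by (rule compact_ms_interp_scale[OF t'])
    have iso: "isometric_ms (interp Y y0 t' (scale t')) (rep (spoke t'))"
      unfolding spoke_def by (rule isometric_GH_point)
    show ?thesis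
      by (rule inf_distortion_isometric_right[OF compact_ms_imp_bounded_ms[OF compact_ms_interp_scale[OF t]]
            compact_ms_imp_bounded_ms[OF c] compact_ms_imp_bounded_ms[OF compact_ms_isometric[OF c iso]] iso,
            symmetric])
  qed
  also have "\<dots> \<le> (D + 1) * (\<bar>scale t - scale t'\<bar> + scale t' * \<bar>t - t'\<bar>)"
    by (rule inf_distortion_interp_le[OF y0 t t' Y diam_Y scale_pos[OF t] scale_pos[OF t']])
  finally show ?thesis by simp
qed

lemma pathin_spoke: "pathin GH_topology spoke"
proof (rule pathin_GH_topologyI)
  fix t :: real assume "t \<in> {0..1}"
  then show "spoke t \<in> GH_space" using spoke_in_GH_space by simp
  let ?bound = "\<lambda>t'. (D + 1) * (\<bar>scale t - scale t'\<bar> + scale t' * \<bar>t - t'\<bar>) / 2"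
  have "(scale \<longlongrightarrow> scale t) (at t within {0..1})"
    using continuous_on_scale \<open>t \<in> {0..1}\<close> unfolding continuous_on_def by blast
  then have "(?bound \<longlongrightarrow> ?bound t) (at t within {0..1})" by (intro tendsto_intros) simp_all
  then have bound: "(?bound \<longlongrightarrow> 0) (at t within {0..1})" by simp
  have inside: "\<forall>\<^sub>F t' in at t within {0..1}. t' \<in> {0..1}"
    by (simp add: eventually_at_filter)
  then have "\<forall>\<^sub>F t' in at t within {0..1}. 0 \<le> dGH_M (spoke t) (spoke t')"
    by (rule eventually_mono) (use \<open>t \<in> {0..1}\<close> dGH_M_nonneg spoke_in_GH_space in simp)
  moreover have "\<forall>\<^sub>F t' in at t within {0..1}. dGH_M (spoke t) (spoke t') \<le> ?bound t'"
    using inside by (rule eventually_mono) (use \<open>t \<in> {0..1}\<close> dGH_M_spoke_le in simp)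
  ultimately show "((\<lambda>t'. dGH_M (spoke t) (spoke t')) \<longlongrightarrow> 0) (at t within {0..1})"
    using bound by (rule tendsto_sandwich[OF _ _ tendsto_const])
qed

lemma scale_0: "scale 0 = 1"
proof (rule scale_eqI)
  have "inf_distortion G (interp Y y0 0 1) = inf_distortion G Y"
    using inf_distortion_isometric_right[OF bounded_G compact_ms_imp_bounded_ms[OF Y]
        bounded_interp isometric_interp_0[OF y0]] by simp
  then show "level 0 1 = 2 * r" unfolding level_def using on_sphere by simp
qed auto

lemma spoke_0: "spoke 0 = iso_class Y"
  unfolding spoke_def scale_0 GH_point_def
  by (rule iso_class_eqI[symmetric, OF isometric_ms_trans[OF isometric_interp_0[OF y0]
        isometric_metric_image_encode_tagged]])

lemma path_component_spoke:
  "path_component_of (subtopology GH_topology {W \<in> GH_space. inf_distortion G (rep W) = 2 * r})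
     (iso_class Y) (spoke 1)"
  unfolding path_component_of_def pathin_subtopology
  using pathin_spoke spoke_in_GH_space inf_distortion_spoke spoke_0 by (intro exI[of _ spoke]) auto

end

lemma spoke_1_eq:
  assumes "sphere_point G d r Y1 y1" "sphere_point G d r Y2 y2"
  shows "sphere_point.spoke G r Y1 y1 1 = sphere_point.spoke G r Y2 y2 1"
proof -
  interpret one: sphere_point G d r Y1 y1 by (rule assms(1))
  interpret two: sphere_point G d r Y2 y2 by (rule assms(2))
  define L where "L = one.scale 1"
  have L: "L > 0" "one.level 1 L = 2 * r" unfolding L_def using one.scale_pos one.level_scale by auto
  have iso: "isometric_ms (interp Y1 y1 1 L) (interp Y2 y2 1 L)"
    by (rule isometric_interp_1[OF one.y0 two.y0 L(1)])
  then have "one.level 1 L = two.level 1 L"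
    unfolding one.level_def two.level_def
    using inf_distortion_isometric_right[OF one.bounded_G one.bounded_interp two.bounded_interp] L(1)
    by simp
  then have "two.scale 1 = L" using two.scale_eqI L by simp
  then show ?thesis
    unfolding one.spoke_def two.spoke_def L_def[symmetric] using GH_point_eqI[OF iso] by simp
qed

lemma path_component_of_distortion_sphere:
  fixes G :: "real metric"
  assumes G: "compact_ms G" and d: "diam_le G d" "d < 2 * r"
    and W: "W \<in> GH_space" "inf_distortion G (rep W) = 2 * r"
    and W': "W' \<in> GH_space" "inf_distortion G (rep W') = 2 * r"
  shows "path_component_of (subtopology GH_topology {W \<in> GH_space. inf_distortion G (rep W) = 2 * r}) W W'"
proof -
  have point: "sphere_point G d r (rep W) (SOME y. y \<in> mspace (rep W))"
    if "W \<in> GH_space" "inf_distortion G (rep W) = 2 * r" for W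
  proof -
    have "compact_ms (rep W)" by (rule compact_ms_rep[OF that(1)])
    moreover from this have "(SOME y. y \<in> mspace (rep W)) \<in> mspace (rep W)"
      unfolding compact_ms_def by (simp add: some_in_eq)
    ultimately show ?thesis using G d that(2) by unfold_locales
  qed
  let ?S = "subtopology GH_topology {W \<in> GH_space. inf_distortion G (rep W) = 2 * r}"
  have "path_component_of ?S W (sphere_point.spoke G r (rep W) (SOME y. y \<in> mspace (rep W)) 1)"
    using sphere_point.path_component_spoke[OF point[OF W]] iso_class_rep[OF W(1)] by simp
  moreover have "path_component_of ?S W' (sphere_point.spoke G r (rep W) (SOME y. y \<in> mspace (rep W)) 1)"
    using sphere_point.path_component_spoke[OF point[OF W']] iso_class_rep[OF W'(1)]
      spoke_1_eq[OF point[OF W] point[OF W']] by simp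
  ultimately show ?thesis by (rule path_component_of_trans[OF _ path_component_of_sym])
qed

theorem corollary3:
  fixes G :: "real metric set" and r :: real
  assumes "G \<in> GH_space" and "r > diam_M G"
  shows "path_connectedin GH_topology {Y \<in> GH_space. dGH_M G Y = r}"
proof -
  have G: "compact_ms (rep G)" by (rule compact_ms_rep[OF assms(1)])
  have diam: "diam_le (rep G) (diam_M G)"
    unfolding diam_M_def by (rule diam_le_mdiam[OF compact_ms_imp_bounded_ms[OF G]])
  moreover have "0 \<le> diam_M G" using diam_le_nonneg[OF diam] G unfolding compact_ms_def by blast
  ultimately have d: "diam_le (rep G) (diam_M G)" "diam_M G < 2 * r" using assms(2) by simp_all
  have "dGH_M G W = r \<longleftrightarrow> inf_distortion (rep G) (rep W) = 2 * r" if "W \<in> GH_space" for W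
    using dGH_M_eq_inf_distortion[OF assms(1) that] by linarith
  then have sphere: "{Y \<in> GH_space. dGH_M G Y = r} = {W \<in> GH_space. inf_distortion (rep G) (rep W) = 2 * r}"
    by blast
  have "path_connected_space (subtopology GH_topology
      {W \<in> GH_space. inf_distortion (rep G) (rep W) = 2 * r})"
    unfolding path_connected_space_iff_path_component topspace_subtopology
    using path_component_of_distortion_sphere[OF G d] by blast
  then show ?thesis
    unfolding sphere path_connectedin_def by (auto simp: topspace_GH_topology)
qed

end
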